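(* In a $2^K$ factorial experiment with a set of effects of interest $\mathcal F_+\subsetneq\mathcal P_K$, for each $*\in\{N,F,L\}$, $\tilde\tau_{*,u,+}=C_{S,+}\hat Y_{*,r}$ and $\tilde\Omega_{*,u,+}=C_{S,+}\hat\Psi_{*,r}C_{S,+}^T$.
   Context: A $2^K$ factorial experiment: $K$ binary factors, $Q=2^K$ treatment levels $q=(z_1,\dots,z_K)\in\{-1,+1\}^K$ identified with $1,\dots,Q$ in lexicographical order ($-1$ before $+1$). $N$ units with outcomes $Y_i$, covariates $x_i\in\mathbb R^J$ ($\sum_ix_i=0$), factor levels $Z_{ik}\in\{-1,+1\}$, and treatment indicator vector $t_i\in\{0,1\}^Q$. $\mathcal P_K$ is the set of nonempty subsets of $\{1,\dots,K\}$, $Z_{i,\mathcal K}=\prod_{k\in\mathcal K}Z_{ik}$, $c_{\mathcal K}\in\mathbb R^Q$ has entry $2^{-(K-1)}\prod_{k\in\mathcal K}z_k$ at level $(z_1,\dots,z_K)$. Given $\mathcal F_+\subsetneq\mathcal P_K$ with $\mathcal F_-=\mathcal P_K\setminus\mathcal F_+\ne\emptyset$, $C_{S,+}$ (resp. $C_{S,-}$) is the matrix with rows $c_{\mathcal K}^T$, $\mathcal K\in\mathcal F_+$ (resp. $\mathcal F_-$). Factor-unsaturated OLS regressions: (N) $Y_i\sim1+\sum_{\mathcal K\in\mathcal F_+}Z_{i,\mathcal K}$; (F) $Y_i\sim1+\sum_{\mathcal K\in\mathcal F_+}Z_{i,\mathcal K}+x_i$; (L) $Y_i\sim1+\sum_{\mathcal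 K\in\mathcal F_+}Z_{i,\mathcal K}+x_i+\sum_{\mathcal K\in\mathcal F_+}Z_{i,\mathcal K}x_i$. $\tilde\tau_{*,u,+}$ is the vector of 2 times the OLS coefficients of $Z_{i,\mathcal K}$, $\mathcal K\in\mathcal F_+$ (ordered as the rows of $C_{S,+}$), and $\tilde\Omega_{*,u,+}$ its Eicker–Huber–White covariance estimator from the same fit (EHW for coefficients: corresponding block of $(X^TX)^{-1}X^T\mathrm{diag}(\hat\epsilon_i^2)X(X^TX)^{-1}$; scaled by 4). Restricted least squares: $\chi_{L,i}=(t_i^T,(t_i\otimes x_i)^T)^T$, $\chi_L$ the matrix with rows $\chi_{L,i}^T$ (assume $\chi_L^T\chi_L$ nonsingular); $\theta=(\theta_Y^T,\theta_\gamma^T)^T$ with $\theta_Y\in\mathbb R^Q$, $\theta_\gamma=(\theta_{\gamma,1}^T,\dots,\theta_{\gamma,Q}^T)^T$, $\theta_{\gamma,q}\in\mathbb R^J$. For a restriction $R\theta=0$, $\hat\theta_r=\arg\min_\theta\sum_i(Y_i-\chi_{L,i}^T\theta)^2$ s.t. $R\theta=0$; with $M_r=(\chi_L^T\chi_L)^{-1}R^T\{R(\chi_L^T\chi_L)^{-1}R^T\}^{-1}$, RLS residuals $\hat\epsilon_{r,i}$ and $\hat\Sigma_r=(\chi_L^T\chi_L)^{-1}\chi_L^T\mathrm{diag}(\hat\epsilon_{r,i}^2)\chi_L(\chi_L^T\chi_L)^{-1}$, the covariance estimator of the $\theta_Y$-part is the upper-left $Q\times Q$ block of $(I-M_rR)\hat\Sigma_r(I-M_rR)^T$.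 $\hat Y_{*,r}$ and $\hat\Psi_{*,r}$ are the $\theta_Y$-part of $\hat\theta_r$ and this covariance estimator under the restrictions: (N) $C_{S,-}\theta_Y=0$, $\theta_\gamma=0$; (F) $C_{S,-}\theta_Y=0$, $\theta_{\gamma,1}=\cdots=\theta_{\gamma,Q}$; (L) $C_{S,-}\theta_Y=0$, $(C_{S,-}\otimes I_J)\theta_\gamma=0$. *)

theory Defs
  imports Complex_Main "Jordan_Normal_Form.Matrix" "Jordan_Normal_Form.Gauss_Jordan_Elimination"
begin

(* Conventions: factors are indexed 0..K-1, units 0..N-1, covariates 0..J-1,
   treatment levels 0..Q-1 with Q = 2^K (0-based versions of 1..K, 1..N, 1..J, 1..Q). *)

(* matrix inverse (used only for nonsingular square matrices) *)
definition minv :: "real mat \<Rightarrow> real mat" where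
  "minv A = (case mat_inverse A of Some B \<Rightarrow> B | None \<Rightarrow> 0\<^sub>m (dim_row A) (dim_col A))"

definition effects :: "nat \<Rightarrow> nat set set" where
  "effects K = {S. S \<subseteq> {0..<K} \<and> S \<noteq> {}}"

(* z_k of treatment level q (lexicographic order, -1 before +1, factor 0 most significant) *)
definition lvl_z :: "nat \<Rightarrow> nat \<Rightarrow> nat \<Rightarrow> real" where
  "lvl_z K q k = (if odd (q div 2 ^ (K - 1 - k)) then 1 else -1)"

definition unit_level :: "nat \<Rightarrow> (nat \<Rightarrow> nat \<Rightarrow> real) \<Rightarrow> nat \<Rightarrow> nat" where
  "unit_level K Z i = (\<Sum>k<K. if Z i k = 1 then 2 ^ (K - 1 - k) else 0)"

definition tind :: "nat \<Rightarrow> (nat \<Rightarrow> nat \<Rightarrow> real) \<Rightarrow> nat \<Rightarrow> nat \<Rightarrow> real" where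
  "tind K Z i q = (if q = unit_level K Z i then 1 else 0)"

definition Zprod :: "(nat \<Rightarrow> nat \<Rightarrow> real) \<Rightarrow> nat \<Rightarrow> nat set \<Rightarrow> real" where
  "Zprod Z i S = (\<Prod>k\<in>S. Z i k)"

definition cvec :: "nat \<Rightarrow> nat set \<Rightarrow> real vec" where
  "cvec K S = vec (2 ^ K) (\<lambda>q. (1 / 2 ^ (K - 1)) * (\<Prod>k\<in>S. lvl_z K q k))"

definition Cmat :: "nat \<Rightarrow> nat set list \<Rightarrow> real mat" where
  "Cmat K Fs = mat (length Fs) (2 ^ K) (\<lambda>(r, q). cvec K (Fs ! r) $ q)"

definition ols :: "real mat \<Rightarrow> real vec \<Rightarrow> real vec" where
  "ols X Y = minv (transpose_mat X * X) *\<^sub>v (transpose_mat X *\<^sub>v Y)"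

definition ehw :: "real mat \<Rightarrow> real vec \<Rightarrow> real mat" where
  "ehw X Y = (let A = minv (transpose_mat X * X);
                  e = Y - X *\<^sub>v ols X Y
              in A * transpose_mat X * mat_diag (dim_row X) (\<lambda>i. (e $ i)\<^sup>2) * X * A)"

definition X_N :: "nat \<Rightarrow> (nat \<Rightarrow> nat \<Rightarrow> real) \<Rightarrow> nat set list \<Rightarrow> real mat" where
  "X_N N Z Fp = mat N (1 + length Fp)
     (\<lambda>(i, c). if c = 0 then 1 else Zprod Z i (Fp ! (c - 1)))"

definition X_F :: "nat \<Rightarrow> nat \<Rightarrow> (nat \<Rightarrow> nat \<Rightarrow> real) \<Rightarrow> (nat \<Rightarrow> nat \<Rightarrow> real) \<Rightarrow> nat set list \<Rightarrow> real mat" where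
  "X_F N J Z x Fp = mat N (1 + length Fp + J)
     (\<lambda>(i, c). if c = 0 then 1
              else if c \<le> length Fp then Zprod Z i (Fp ! (c - 1))
              else x i (c - 1 - length Fp))"

definition X_L :: "nat \<Rightarrow> nat \<Rightarrow> (nat \<Rightarrow> nat \<Rightarrow> real) \<Rightarrow> (nat \<Rightarrow> nat \<Rightarrow> real) \<Rightarrow> nat set list \<Rightarrow> real mat" where
  "X_L N J Z x Fp = mat N (1 + length Fp + J + length Fp * J)
     (\<lambda>(i, c). if c = 0 then 1
              else if c \<le> length Fp then Zprod Z i (Fp ! (c - 1))
              else if c < 1 + length Fp + J then x i (c - 1 - length Fp)
              else (let d = c - 1 - length Fp - J in
                    Zprod Z i (Fp ! (d div J)) * x i (d mod J)))"

definition tau_u :: "nat \<Rightarrow> real mat \<Rightarrow> real vec \<Rightarrow> real vec" where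
  "tau_u p X Y = vec p (\<lambda>a. 2 * ols X Y $ (a + 1))"

definition Omega_u :: "nat \<Rightarrow> real mat \<Rightarrow> real vec \<Rightarrow> real mat" where
  "Omega_u p X Y = mat p p (\<lambda>(a, b). 4 * ehw X Y $$ (a + 1, b + 1))"

(* chi_L: rows (t_i^T, (t_i \<otimes> x_i)^T) *)
definition chiL :: "nat \<Rightarrow> nat \<Rightarrow> nat \<Rightarrow> (nat \<Rightarrow> nat \<Rightarrow> real) \<Rightarrow> (nat \<Rightarrow> nat \<Rightarrow> real) \<Rightarrow> real mat" where
  "chiL K N J Z x = mat N (2 ^ K + 2 ^ K * J)
     (\<lambda>(i, c). if c < 2 ^ K then tind K Z i c
              else tind K Z i ((c - 2 ^ K) div J) * x i ((c - 2 ^ K) mod J))"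

definition ssr :: "real mat \<Rightarrow> real vec \<Rightarrow> real vec \<Rightarrow> real" where
  "ssr chi Y \<theta> = (Y - chi *\<^sub>v \<theta>) \<bullet> (Y - chi *\<^sub>v \<theta>)"

definition rls :: "real mat \<Rightarrow> real vec \<Rightarrow> real mat \<Rightarrow> real vec" where
  "rls chi Y R = (THE \<theta>. \<theta> \<in> carrier_vec (dim_col chi) \<and> R *\<^sub>v \<theta> = 0\<^sub>v (dim_row R) \<and>
      (\<forall>\<theta>'\<in>carrier_vec (dim_col chi). R *\<^sub>v \<theta>' = 0\<^sub>v (dim_row R) \<longrightarrow> ssr chi Y \<theta> \<le> ssr chi Y \<theta>'))"

definition rls_cov_full :: "real mat \<Rightarrow> real vec \<Rightarrow> real mat \<Rightarrow> real mat" where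
  "rls_cov_full chi Y R = (let G = minv (transpose_mat chi * chi);
       M = G * transpose_mat R * minv (R * G * transpose_mat R);
       e = Y - chi *\<^sub>v rls chi Y R;
       S = G * transpose_mat chi * mat_diag (dim_row chi) (\<lambda>i. (e $ i)\<^sup>2) * chi * G;
       P = 1\<^sub>m (dim_col chi) - M * R
     in P * S * transpose_mat P)"

definition Yhat_r :: "nat \<Rightarrow> real mat \<Rightarrow> real vec \<Rightarrow> real mat \<Rightarrow> real vec" where
  "Yhat_r Q chi Y R = vec Q (\<lambda>q. rls chi Y R $ q)"

definition Psi_r :: "nat \<Rightarrow> real mat \<Rightarrow> real vec \<Rightarrow> real mat \<Rightarrow> real mat" where
  "Psi_r Q chi Y R = mat Q Q (\<lambda>(a, b). rls_cov_full chi Y R $$ (a, b))"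

(* restriction matrices; Cm = C_{S,-} (m x Q); parameter layout:
   theta_Y = entries 0..Q-1, theta_{gamma,q} entry j at index Q + q*J + j *)

(* (N): C_{S,-} theta_Y = 0, theta_gamma = 0 *)
definition R_N :: "nat \<Rightarrow> nat \<Rightarrow> real mat \<Rightarrow> real mat" where
  "R_N Q J Cm = mat (dim_row Cm + Q * J) (Q + Q * J)
     (\<lambda>(r, c). if r < dim_row Cm then (if c < Q then Cm $$ (r, c) else 0)
              else (if c = r - dim_row Cm + Q then 1 else 0))"

(* (F): C_{S,-} theta_Y = 0, theta_{gamma,q} = theta_{gamma,q+1} for q = 0..Q-2 *)
definition R_F :: "nat \<Rightarrow> nat \<Rightarrow> real mat \<Rightarrow> real mat" where
  "R_F Q J Cm = mat (dim_row Cm + (Q - 1) * J) (Q + Q * J)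
     (\<lambda>(r, c). if r < dim_row Cm then (if c < Q then Cm $$ (r, c) else 0)
              else (let r' = r - dim_row Cm in
                    if c = Q + r' then 1 else if c = Q + r' + J then -1 else 0))"

(* (L): C_{S,-} theta_Y = 0, (C_{S,-} \<otimes> I_J) theta_gamma = 0 *)
definition R_L :: "nat \<Rightarrow> nat \<Rightarrow> real mat \<Rightarrow> real mat" where
  "R_L Q J Cm = mat (dim_row Cm + dim_row Cm * J) (Q + Q * J)
     (\<lambda>(r, c). if r < dim_row Cm then (if c < Q then Cm $$ (r, c) else 0)
              else if c < Q then 0
              else (let r' = r - dim_row Cm; c' = c - Q in
                    if c' mod J = r' mod J then Cm $$ (r' div J, c' div J) else 0))"

end

(*
  Each right-hand side is a restricted least-squares fit on the saturated design chi_L.  If the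
  columns of B form a basis of the null space of the restriction R, restricted least squares over
  theta is ordinary least squares over beta with theta = B beta and design chi_L B; moreover the
  projector I - M_r R equals B (B^T H B)^-1 B^T H with H = chi_L^T chi_L, so the restricted
  covariance estimator is B Omega B^T, where Omega is the EHW matrix of the regression on chi_L B.

  Let h_S(q) = prod_{k in S} z_k(q) be the factorial contrast vectors, so c_S = 2^-(K-1) h_S.
  They are orthogonal and complete, so the null space of C_{S,-} is spanned by h_S for S = {}
  and S in F_+, while the null space of the covariate restriction is spanned by the h_S (x) e_j
  with S ranging over no set (N), over S = {} (F), or over S = {} and S in F_+ (L).  As h_S at the
  treatment level of unit i equals Z_{i,S}, chi_L B is exactly the design matrix of the
  factor-based regression.  Orthogonality also gives C_{S,+} (first 2^K rows of B) = 2 (0 | I | 0),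
  which reads off twice the coefficients of the Z_{i,S}, S in F_+, and four times the
  corresponding block of the covariance.
*)

theory Submission
  imports Defs "Jordan_Normal_Form.Determinant"
begin

section \<open>Matrix algebra over the reals\<close>

text \<open>Library lemmas restated with dimension equations instead of carrier hypotheses, so that the
  simplifier can discharge their side conditions.\<close>

lemma assoc_mult_mat_dims:
  "dim_col A = dim_row B \<Longrightarrow> dim_col B = dim_row C \<Longrightarrow> (A :: real mat) * B * C = A * (B * C)"
  by (rule assoc_mult_mat[of A "dim_row A" "dim_col A" B "dim_col B" C "dim_col C"]) auto

lemma transpose_mult_dims:
  "dim_col A = dim_row B \<Longrightarrow> transpose_mat ((A :: real mat) * B) = transpose_mat B * transpose_mat A"
  by (rule transpose_mult[of A "dim_row A" "dim_col A" B "dim_col B"]) auto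

lemma mult_smult_left_dims:
  "dim_col A = dim_row B \<Longrightarrow> (a \<cdot>\<^sub>m A) * B = a \<cdot>\<^sub>m (A * (B :: real mat))"
  by (rule mult_smult_assoc_mat) auto

lemma mult_smult_right_dims:
  "dim_col A = dim_row B \<Longrightarrow> A * (a \<cdot>\<^sub>m B) = a \<cdot>\<^sub>m (A * (B :: real mat))"
  by (rule mult_smult_distrib) auto

lemma smult_mult_mat_vec_dims:
  "dim_col A = dim_vec v \<Longrightarrow> (a \<cdot>\<^sub>m A) *\<^sub>v v = a \<cdot>\<^sub>v (A *\<^sub>v (v :: real vec))"
  by (rule eq_vecI) (auto simp: scalar_prod_def sum_distrib_left mult.assoc)

lemma transpose_smult_mat: "transpose_mat (a \<cdot>\<^sub>m A) = a \<cdot>\<^sub>m transpose_mat (A :: real mat)"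
  by (rule eq_matI) auto

lemma one_smult_mat [simp]: "(1 :: real) \<cdot>\<^sub>m A = A"
  by (rule eq_matI) auto

lemma smult_smult_mat: "a \<cdot>\<^sub>m (b \<cdot>\<^sub>m A) = (a * b) \<cdot>\<^sub>m (A :: real mat)"
  by (rule eq_matI) auto

lemma mult_mat_vec_zero [simp]: "A \<in> carrier_mat n m \<Longrightarrow> A *\<^sub>v 0\<^sub>v m = (0\<^sub>v n :: real vec)"
  by (intro eq_vecI) auto

lemma zero_mult_mat_vec [simp]: "v \<in> carrier_vec m \<Longrightarrow> 0\<^sub>m n m *\<^sub>v v = (0\<^sub>v n :: real vec)"
  by (intro eq_vecI) (auto simp: scalar_prod_def)

lemma scalar_prod_self_nonneg: "(v :: real vec) \<bullet> v \<ge> 0"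
  unfolding scalar_prod_def by (auto intro: sum_nonneg)

lemma scalar_prod_self_eq_0:
  assumes "(v :: real vec) \<in> carrier_vec n" and "v \<bullet> v = 0"
  shows "v = 0\<^sub>v n"
proof -
  have "\<forall>i\<in>{0..<n}. v $ i * v $ i = 0"
    using assms by (subst sum_nonneg_eq_0_iff[symmetric]) (auto simp: scalar_prod_def)
  then show ?thesis using assms(1) by (intro eq_vecI) auto
qed

lemma invertible_mat_det_nonzero:
  assumes "invertible_mat (A :: real mat)" and A: "A \<in> carrier_mat n n"
  shows "det A \<noteq> 0"
proof -
  from assms(1) obtain B where AB: "A * B = 1\<^sub>m (dim_row A)" and BA: "B * A = 1\<^sub>m (dim_row B)"
    unfolding invertible_mat_def inverts_mat_def by blast
  have "dim_col B = n" "dim_row B = n"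
    using arg_cong[OF AB, of dim_col] arg_cong[OF BA, of dim_col] A by auto
  then have "B \<in> carrier_mat n n" by auto
  then have "det A * det B = 1" using det_mult[OF A] AB A by (metis carrier_matD(1) det_one)
  then show ?thesis by auto
qed

lemma minv_carrier: "A \<in> carrier_mat n n \<Longrightarrow> minv A \<in> carrier_mat n n"
  by (cases "mat_inverse A") (auto simp: minv_def dest: mat_inverse(2))

lemma minv_inverse:
  fixes A :: "real mat"
  assumes A: "A \<in> carrier_mat n n" and "det A \<noteq> 0"
  shows "A * minv A = 1\<^sub>m n" and "minv A * A = 1\<^sub>m n"
proof -
  have unit: "A \<in> Units (ring_mat TYPE(real) n ())" by (rule det_non_zero_imp_unit[OF A assms(2)])
  have "mat_inverse A \<noteq> None"
  proof
    assume "mat_inverse A = None"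
    from mat_inverse(1)[OF A this] have "A \<notin> Units (ring_mat TYPE(real) n ())" .
    with unit show False by simp
  qed
  then obtain B where B: "mat_inverse A = Some B" by blast
  then show "A * minv A = 1\<^sub>m n" "minv A * A = 1\<^sub>m n"
    using mat_inverse(2)[OF A B] by (auto simp: minv_def)
qed

lemma minv_symmetric:
  fixes H :: "real mat"
  assumes H: "H \<in> carrier_mat n n" and "det H \<noteq> 0" and sym: "transpose_mat H = H"
  shows "transpose_mat (minv H) = minv H"
proof -
  let ?G = "minv H"
  have G: "?G \<in> carrier_mat n n" by (rule minv_carrier[OF H])
  note inv = minv_inverse[OF H assms(2)]
  have "transpose_mat ?G * H = 1\<^sub>m n"
    using arg_cong[OF inv(1), of transpose_mat] transpose_mult[OF H G] sym by simp
  then have "transpose_mat ?G * H * ?G = ?G" using G by simp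
  moreover have "transpose_mat ?G * H * ?G = transpose_mat ?G * (H * ?G)"
    using G H by (simp add: assoc_mult_mat_dims)
  ultimately show ?thesis using G inv(1) by simp
qed

lemma det_nonzero_kernel_trivial:
  fixes A :: "real mat"
  assumes A: "A \<in> carrier_mat n n" and "det A \<noteq> 0" and v: "v \<in> carrier_vec n" and "A *\<^sub>v v = 0\<^sub>v n"
  shows "v = 0\<^sub>v n"
  using det_0_iff_vec_prod_zero[OF A] assms by blast

lemma det_gram_nonzero:
  fixes M :: "real mat"
  assumes M: "M \<in> carrier_mat n k"
    and inj: "\<And>v. v \<in> carrier_vec k \<Longrightarrow> M *\<^sub>v v = 0\<^sub>v n \<Longrightarrow> v = 0\<^sub>v k"
  shows "det (transpose_mat M * M) \<noteq> 0"
proof -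
  have "v = 0\<^sub>v k" if v: "v \<in> carrier_vec k" and z: "(transpose_mat M * M) *\<^sub>v v = 0\<^sub>v k" for v
  proof -
    have "(M *\<^sub>v v) \<bullet> (M *\<^sub>v v) = (transpose_mat M *\<^sub>v (M *\<^sub>v v)) \<bullet> v"
      using transpose_vec_mult_scalar[OF M v, of "M *\<^sub>v v"] M v by simp
    also have "\<dots> = 0" using z M v by simp
    finally have "M *\<^sub>v v = 0\<^sub>v n" using scalar_prod_self_eq_0[of "M *\<^sub>v v" n] M v by auto
    then show ?thesis using inj[OF v] by simp
  qed
  then show ?thesis using det_0_iff_vec_prod_zero[of "transpose_mat M * M" k] M by auto
qed

section \<open>Restricted least squares through a basis of the null space\<close>

lemma ols_carrier: "X \<in> carrier_mat n k \<Longrightarrow> ols X Y \<in> carrier_vec k"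
  unfolding ols_def using minv_carrier[of "transpose_mat X * X" k] by (auto intro!: carrier_vecI)

lemma ehw_carrier: "X \<in> carrier_mat n k \<Longrightarrow> ehw X Y \<in> carrier_mat k k"
  unfolding ehw_def Let_def using minv_carrier[of "transpose_mat X * X" k]
  by (auto intro!: carrier_matI)

lemma ssr_ols_pythagoras:
  fixes X :: "real mat"
  assumes X: "X \<in> carrier_mat n k" and det: "det (transpose_mat X * X) \<noteq> 0"
    and Y: "Y \<in> carrier_vec n" and \<beta>: "\<beta> \<in> carrier_vec k"
  shows "ssr X Y \<beta> = ssr X Y (ols X Y) + (X *\<^sub>v (ols X Y - \<beta>)) \<bullet> (X *\<^sub>v (ols X Y - \<beta>))"
proof -
  let ?XtX = "transpose_mat X * X" and ?b = "ols X Y"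
  have XtX: "?XtX \<in> carrier_mat k k" using X by simp
  have b: "?b \<in> carrier_vec k" by (rule ols_carrier[OF X])
  define e where "e = Y - X *\<^sub>v ?b"
  have e: "e \<in> carrier_vec n" unfolding e_def using X Y b by simp
  have normal: "transpose_mat X *\<^sub>v e = 0\<^sub>v k"
  proof -
    have "transpose_mat X *\<^sub>v e = transpose_mat X *\<^sub>v Y - ?XtX *\<^sub>v ?b"
      unfolding e_def using X Y b by (subst mult_minus_distrib_mat_vec[of _ k n]) auto
    also have "?XtX *\<^sub>v ?b = (?XtX * minv ?XtX) *\<^sub>v (transpose_mat X *\<^sub>v Y)"
      unfolding ols_def using minv_carrier[OF XtX] XtX X Y by (subst assoc_mult_mat_vec) auto
    finally show ?thesis using minv_inverse(1)[OF XtX det] X Y by simp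
  qed
  define w where "w = X *\<^sub>v (?b - \<beta>)"
  have w: "w \<in> carrier_vec n" unfolding w_def using X b \<beta> by simp
  have ew: "e \<bullet> w = 0"
    unfolding w_def using transpose_vec_mult_scalar[OF X _ e, of "?b - \<beta>"] normal b \<beta> by simp
  have "Y - X *\<^sub>v \<beta> = e + w"
    unfolding e_def w_def mult_minus_distrib_mat_vec[OF X b \<beta>]
    by (rule eq_vecI) (use X Y b \<beta> in auto)
  then have "ssr X Y \<beta> = e \<bullet> e + e \<bullet> w + w \<bullet> e + w \<bullet> w"
    unfolding ssr_def using e w by (simp add: add_scalar_prod_distrib scalar_prod_add_distrib)
  also have "w \<bullet> e = e \<bullet> w" by (rule comm_scalar_prod[OF w e])
  finally have "ssr X Y \<beta> = e \<bullet> e + w \<bullet> w" using ew by simp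
  then show ?thesis unfolding ssr_def e_def w_def .
qed

lemma ols_unique_minimiser:
  fixes X :: "real mat"
  assumes X: "X \<in> carrier_mat n k" and det: "det (transpose_mat X * X) \<noteq> 0"
    and Y: "Y \<in> carrier_vec n" and \<beta>: "\<beta> \<in> carrier_vec k"
  shows "ssr X Y (ols X Y) \<le> ssr X Y \<beta>"
    and "ssr X Y \<beta> \<le> ssr X Y (ols X Y) \<Longrightarrow> \<beta> = ols X Y"
proof -
  let ?d = "ols X Y - \<beta>"
  note pyth = ssr_ols_pythagoras[OF X det Y \<beta>]
  then show "ssr X Y (ols X Y) \<le> ssr X Y \<beta>" using scalar_prod_self_nonneg by simp
  assume "ssr X Y \<beta> \<le> ssr X Y (ols X Y)"
  then have "(X *\<^sub>v ?d) \<bullet> (X *\<^sub>v ?d) = 0"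
    using pyth scalar_prod_self_nonneg[of "X *\<^sub>v ?d"] by linarith
  have b: "ols X Y \<in> carrier_vec k" by (rule ols_carrier[OF X])
  then have d: "?d \<in> carrier_vec k" using \<beta> by simp
  have "X *\<^sub>v ?d = 0\<^sub>v n" by (rule scalar_prod_self_eq_0) (use X d \<open>_ = 0\<close> in auto)
  then have "(transpose_mat X * X) *\<^sub>v ?d = 0\<^sub>v k" using X d by simp
  then have "?d = 0\<^sub>v k" using det_nonzero_kernel_trivial[OF _ det d] X by simp
  moreover have "\<beta> = ols X Y - ?d" by (rule eq_vecI) (use d \<beta> in auto)
  ultimately show "\<beta> = ols X Y" using b by simp
qed

text \<open>The columns of \<open>B\<close> are a basis of the null space of \<open>R\<close>, with left inverse \<open>L\<close>, and
  \<open>Sr\<close> is a right inverse of \<open>R\<close> such that the identity splits as \<open>B L + Sr R\<close>.\<close>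

definition kernel_split :: "real mat \<Rightarrow> real mat \<Rightarrow> real mat \<Rightarrow> real mat \<Rightarrow> bool" where
  "kernel_split R Sr B L \<longleftrightarrow>
     Sr \<in> carrier_mat (dim_col R) (dim_row R) \<and> B \<in> carrier_mat (dim_col R) (dim_col B) \<and>
     L \<in> carrier_mat (dim_col B) (dim_col R) \<and>
     R * Sr = 1\<^sub>m (dim_row R) \<and> R * B = 0\<^sub>m (dim_row R) (dim_col B) \<and>
     L * B = 1\<^sub>m (dim_col B) \<and> B * L + Sr * R = 1\<^sub>m (dim_col R)"

lemma kernel_splitI:
  assumes "R \<in> carrier_mat r d" "Sr \<in> carrier_mat d r" "B \<in> carrier_mat d k" "L \<in> carrier_mat k d"
    and "R * Sr = 1\<^sub>m r" "R * B = 0\<^sub>m r k" "L * B = 1\<^sub>m k" "B * L + Sr * R = 1\<^sub>m d"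
  shows "kernel_split R Sr B L"
  using assms unfolding kernel_split_def by auto

lemma kernel_splitD:
  assumes "kernel_split R Sr B L" and "R \<in> carrier_mat r d"
  shows "Sr \<in> carrier_mat d r" "B \<in> carrier_mat d (dim_col B)" "L \<in> carrier_mat (dim_col B) d"
    and "R * Sr = 1\<^sub>m r" "R * B = 0\<^sub>m r (dim_col B)" "L * B = 1\<^sub>m (dim_col B)"
    and "B * L + Sr * R = 1\<^sub>m d"
  using assms unfolding kernel_split_def by auto

lemma kernel_split_null_space:
  assumes ks: "kernel_split R Sr B L" and R: "R \<in> carrier_mat r d"
    and M: "M \<in> carrier_mat d c" and RM: "R * M = 0\<^sub>m r c"
  shows "B * (L * M) = M"
proof -
  note ks = kernel_splitD[OF ks R]
  have LM: "L * M \<in> carrier_mat (dim_col B) c" using ks(3) M by simp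
  have "B * L * M + Sr * R * M = (B * L + Sr * R) * M"
    using add_mult_distrib_mat[OF mult_carrier_mat[OF ks(2,3)] mult_carrier_mat[OF ks(1) R] M] ..
  also have "\<dots> = M" using ks(7) M by simp
  also have "Sr * R * M = 0\<^sub>m d c" using assoc_mult_mat[OF ks(1) R M] RM ks(1) by simp
  also have "B * L * M = B * (L * M)" by (rule assoc_mult_mat[OF ks(2,3) M])
  finally show ?thesis using right_add_zero_mat[OF mult_carrier_mat[OF ks(2) LM]] by metis
qed

lemma kernel_split_null_space_vec:
  assumes ks: "kernel_split R Sr B L" and R: "R \<in> carrier_mat r d"
    and \<theta>: "\<theta> \<in> carrier_vec d" and R\<theta>: "R *\<^sub>v \<theta> = 0\<^sub>v r"
  shows "B *\<^sub>v (L *\<^sub>v \<theta>) = \<theta>"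
proof -
  note ks = kernel_splitD[OF ks R]
  have L\<theta>: "L *\<^sub>v \<theta> \<in> carrier_vec (dim_col B)" using ks(3) \<theta> by simp
  have "(B * L) *\<^sub>v \<theta> + (Sr * R) *\<^sub>v \<theta> = (B * L + Sr * R) *\<^sub>v \<theta>"
    using add_mult_distrib_mat_vec[OF mult_carrier_mat[OF ks(2,3)] mult_carrier_mat[OF ks(1) R] \<theta>] ..
  also have "\<dots> = \<theta>" using ks(7) \<theta> by simp
  also have "(Sr * R) *\<^sub>v \<theta> = 0\<^sub>v d" using assoc_mult_mat_vec[OF ks(1) R \<theta>] R\<theta> ks(1) by simp
  also have "(B * L) *\<^sub>v \<theta> = B *\<^sub>v (L *\<^sub>v \<theta>)" by (rule assoc_mult_mat_vec[OF ks(2,3) \<theta>])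
  finally show ?thesis using right_zero_vec[OF mult_mat_vec_carrier[OF ks(2) L\<theta>]] by metis
qed

lemma det_gram_mult_nonzero:
  fixes chi B L :: "real mat"
  assumes chi: "chi \<in> carrier_mat n d" and det: "det (transpose_mat chi * chi) \<noteq> 0"
    and B: "B \<in> carrier_mat d k" and L: "L \<in> carrier_mat k d" and LB: "L * B = 1\<^sub>m k"
  shows "det (transpose_mat (chi * B) * (chi * B)) \<noteq> 0"
proof (rule det_gram_nonzero)
  show "chi * B \<in> carrier_mat n k" using chi B by simp
  fix v assume v: "v \<in> carrier_vec k" and "(chi * B) *\<^sub>v v = 0\<^sub>v n"
  then have "(transpose_mat chi * chi) *\<^sub>v (B *\<^sub>v v) = 0\<^sub>v d" using chi B by simp
  then have "B *\<^sub>v v = 0\<^sub>v d" using det_nonzero_kernel_trivial[OF _ det] chi B v by simp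
  then have "(L * B) *\<^sub>v v = 0\<^sub>v k" using L B v by simp
  then show "v = 0\<^sub>v k" using LB v by simp
qed

lemma gram_minv:
  fixes chi :: "real mat"
  assumes chi: "chi \<in> carrier_mat n d" and det: "det (transpose_mat chi * chi) \<noteq> 0"
  defines "H \<equiv> transpose_mat chi * chi"
  shows "H \<in> carrier_mat d d" and "minv H \<in> carrier_mat d d" and "transpose_mat (minv H) = minv H"
    and "dim_row W = d \<Longrightarrow> H * (minv H * W) = W" and "dim_row W = d \<Longrightarrow> minv H * (H * W) = W"
proof -
  show H: "H \<in> carrier_mat d d" unfolding H_def using chi by simp
  show G: "minv H \<in> carrier_mat d d" by (rule minv_carrier[OF H])
  note inv = minv_inverse[OF H det[folded H_def]]
  show "transpose_mat (minv H) = minv H"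
    by (rule minv_symmetric[OF H det[folded H_def]]) (use chi in \<open>simp add: H_def transpose_mult_dims\<close>)
  show "H * (minv H * W) = W" and "minv H * (H * W) = W" if "dim_row W = d"
    using that inv carrier_matD[OF H] carrier_matD[OF G] by (simp_all flip: assoc_mult_mat_dims)
qed

lemma rls_eqI:
  assumes "\<theta>\<^sub>0 \<in> carrier_vec (dim_col chi)" and "R *\<^sub>v \<theta>\<^sub>0 = 0\<^sub>v (dim_row R)"
    and "\<And>\<theta>. \<theta> \<in> carrier_vec (dim_col chi) \<Longrightarrow> R *\<^sub>v \<theta> = 0\<^sub>v (dim_row R) \<Longrightarrow>
      ssr chi Y \<theta>\<^sub>0 \<le> ssr chi Y \<theta>"
    and "\<And>\<theta>. \<theta> \<in> carrier_vec (dim_col chi) \<Longrightarrow> R *\<^sub>v \<theta> = 0\<^sub>v (dim_row R) \<Longrightarrow>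
      ssr chi Y \<theta> \<le> ssr chi Y \<theta>\<^sub>0 \<Longrightarrow> \<theta> = \<theta>\<^sub>0"
  shows "rls chi Y R = \<theta>\<^sub>0"
  unfolding rls_def using assms by (intro the_equality) blast+

lemma rls_eq_ols_null_space_basis:
  fixes chi R :: "real mat"
  assumes ks: "kernel_split R Sr B L" and R: "R \<in> carrier_mat r d"
    and chi: "chi \<in> carrier_mat n d" and det: "det (transpose_mat chi * chi) \<noteq> 0"
    and Y: "Y \<in> carrier_vec n"
  shows "rls chi Y R = B *\<^sub>v ols (chi * B) Y"
proof -
  define k where "k = dim_col B"
  note ks' = kernel_splitD[OF ks R, folded k_def]
  define X where "X = chi * B"
  have X: "X \<in> carrier_mat n k" unfolding X_def using chi ks' by simp
  have detX: "det (transpose_mat X * X) \<noteq> 0"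
    unfolding X_def using det_gram_mult_nonzero[OF chi det ks'(2,3,6)] .
  have ssr_B: "ssr chi Y (B *\<^sub>v \<beta>) = ssr X Y \<beta>" if "\<beta> \<in> carrier_vec k" for \<beta>
    unfolding ssr_def X_def using chi ks' that by simp
  have param: "\<theta> = B *\<^sub>v (L *\<^sub>v \<theta>)" "L *\<^sub>v \<theta> \<in> carrier_vec k"
    if "\<theta> \<in> carrier_vec (dim_col chi)" "R *\<^sub>v \<theta> = 0\<^sub>v (dim_row R)" for \<theta>
    using kernel_split_null_space_vec[OF ks R] ks' that chi R by auto
  define \<beta> where "\<beta> = ols X Y"
  have \<beta>: "\<beta> \<in> carrier_vec k" unfolding \<beta>_def by (rule ols_carrier[OF X])
  have "R *\<^sub>v (B *\<^sub>v \<beta>) = (R * B) *\<^sub>v \<beta>" using assoc_mult_mat_vec[OF R ks'(2) \<beta>] ..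
  then have RB\<beta>: "R *\<^sub>v (B *\<^sub>v \<beta>) = 0\<^sub>v (dim_row R)" using ks' \<beta> R by simp
  have "rls chi Y R = B *\<^sub>v \<beta>"
  proof (rule rls_eqI)
    fix \<theta> assume feasible: "\<theta> \<in> carrier_vec (dim_col chi)" "R *\<^sub>v \<theta> = 0\<^sub>v (dim_row R)"
    note \<theta> = param[OF feasible]
    show "ssr chi Y (B *\<^sub>v \<beta>) \<le> ssr chi Y \<theta>"
      using ols_unique_minimiser(1)[OF X detX Y \<theta>(2)] ssr_B \<beta> \<theta> unfolding \<beta>_def by metis
    assume "ssr chi Y \<theta> \<le> ssr chi Y (B *\<^sub>v \<beta>)"
    then have "ssr X Y (L *\<^sub>v \<theta>) \<le> ssr X Y \<beta>" using ssr_B \<beta> \<theta> by metis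
    then have "L *\<^sub>v \<theta> = \<beta>" using ols_unique_minimiser(2)[OF X detX Y \<theta>(2)] unfolding \<beta>_def by simp
    then show "\<theta> = B *\<^sub>v \<beta>" using \<theta>(1) by simp
  qed (use RB\<beta> ks' chi \<beta> in auto)
  then show ?thesis unfolding \<beta>_def X_def .
qed

text \<open>\<open>R G R\<^sup>T\<close> is the Gram matrix of \<open>\<chi> G R\<^sup>T\<close>, which is injective because \<open>R\<close> has a right
  inverse.\<close>

lemma restriction_multiplier_right_inverse:
  fixes chi R Sr :: "real mat"
  assumes R: "R \<in> carrier_mat r d" and Sr: "Sr \<in> carrier_mat d r" and RS: "R * Sr = 1\<^sub>m r"
    and chi: "chi \<in> carrier_mat n d" and det: "det (transpose_mat chi * chi) \<noteq> 0"
  defines "G \<equiv> minv (transpose_mat chi * chi)"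
  shows "R * (G * transpose_mat R * minv (R * G * transpose_mat R)) = 1\<^sub>m r"
proof -
  define H where "H = transpose_mat chi * chi"
  note G = gram_minv[OF chi det, folded H_def, folded G_def[folded H_def]]
  note dims = carrier_matD[OF chi] carrier_matD[OF R] carrier_matD[OF Sr] carrier_matD[OF G(1)]
    carrier_matD[OF G(2)]
  have "transpose_mat (chi * (G * transpose_mat R)) * (chi * (G * transpose_mat R))
      = R * G * (H * (G * transpose_mat R))"
    unfolding H_def using dims G(3) by (simp add: assoc_mult_mat_dims transpose_mult_dims)
  also have "\<dots> = R * G * transpose_mat R" using dims by (simp add: G(4))
  finally have gram: "transpose_mat (chi * (G * transpose_mat R)) * (chi * (G * transpose_mat R))
      = R * G * transpose_mat R" .
  have "(transpose_mat Sr * H) * (G * transpose_mat R) = transpose_mat (R * Sr)"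
    using dims by (simp add: assoc_mult_mat_dims transpose_mult_dims G(4))
  then have inv: "(transpose_mat Sr * H) * (G * transpose_mat R) = 1\<^sub>m r" using RS by simp
  have "G * transpose_mat R \<in> carrier_mat d r" "transpose_mat Sr * H \<in> carrier_mat r d"
    using dims by (auto intro!: carrier_matI)
  from det_gram_mult_nonzero[OF chi det this inv] have "det (R * G * transpose_mat R) \<noteq> 0"
    unfolding gram .
  moreover have RGR: "R * G * transpose_mat R \<in> carrier_mat r r" using dims by (auto intro!: carrier_matI)
  ultimately have "R * G * transpose_mat R * minv (R * G * transpose_mat R) = 1\<^sub>m r"
    using minv_inverse(1) by blast
  then show ?thesis using dims minv_carrier[OF RGR] by (simp add: assoc_mult_mat_dims)
qed

lemma rls_projector_eq:
  fixes chi R :: "real mat"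
  assumes ks: "kernel_split R Sr B L" and R: "R \<in> carrier_mat r d"
    and chi: "chi \<in> carrier_mat n d" and det: "det (transpose_mat chi * chi) \<noteq> 0"
  defines "H \<equiv> transpose_mat chi * chi"
  shows "1\<^sub>m d - minv H * transpose_mat R * minv (R * minv H * transpose_mat R) * R
       = B * minv (transpose_mat (chi * B) * (chi * B)) * transpose_mat B * H"
proof -
  define k where "k = dim_col B"
  note ks' = kernel_splitD[OF ks R, folded k_def]
  define G where "G = minv H"
  define Mr where "Mr = G * transpose_mat R * minv (R * G * transpose_mat R)"
  define A where "A = minv (transpose_mat (chi * B) * (chi * B))"
  note gram = gram_minv[OF chi det, folded H_def, folded G_def]
  have RGR: "R * G * transpose_mat R \<in> carrier_mat r r" using gram(2) R by (auto intro!: carrier_matI)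
  note dims = carrier_matD[OF chi] carrier_matD[OF R] carrier_matD[OF ks'(2)] carrier_matD[OF ks'(3)]
    carrier_matD[OF gram(1)] carrier_matD[OF gram(2)] carrier_matD[OF minv_carrier[OF RGR]]
  have Mr: "Mr \<in> carrier_mat d r" unfolding Mr_def using dims by (auto intro!: carrier_matI)
  have RMr: "R * Mr = 1\<^sub>m r"
    unfolding Mr_def G_def H_def by (rule restriction_multiplier_right_inverse[OF R ks'(1,4) chi det])
  define P where "P = 1\<^sub>m d - Mr * R"
  have P: "P \<in> carrier_mat d d" unfolding P_def using Mr R by (intro minus_carrier_mat) simp
  have "R * P = R * 1\<^sub>m d - R * (Mr * R)"
    unfolding P_def by (rule mult_minus_distrib_mat[OF R one_carrier_mat mult_carrier_mat[OF Mr R]])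
  also have "R * (Mr * R) = R" using assoc_mult_mat[OF R Mr R] RMr R by simp
  finally have "R * P = 0\<^sub>m r d" using R by simp
  then have BLP: "B * (L * P) = P" by (rule kernel_split_null_space[OF ks R P])
  have XtX: "transpose_mat (chi * B) * (chi * B) \<in> carrier_mat k k"
    using chi ks'(2) by (auto intro!: carrier_matI)
  have "transpose_mat (chi * B) * (chi * B) = transpose_mat B * (H * B)"
    unfolding H_def using dims by (simp add: assoc_mult_mat_dims transpose_mult_dims)
  moreover have "A * (transpose_mat (chi * B) * (chi * B)) = 1\<^sub>m k"
    unfolding A_def by (rule minv_inverse(2)[OF XtX det_gram_mult_nonzero[OF chi det ks'(2,3,6)]])
  ultimately have AX: "A * (transpose_mat B * (H * B)) = 1\<^sub>m k" by simp
  note dimA = carrier_matD[OF minv_carrier[OF XtX, folded A_def]]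
  \<comment> \<open>\<open>T\<close> fixes the columns of \<open>B\<close> and annihilates \<open>M\<^sub>r\<close>; as \<open>1 = B L P + M\<^sub>r R\<close>, it equals \<open>P\<close>.\<close>
  define T where "T = B * A * transpose_mat B * H"
  have T: "T \<in> carrier_mat d d" unfolding T_def using dims dimA by auto
  have TB: "T * B = B" unfolding T_def using dims dimA AX by (simp add: assoc_mult_mat_dims)
  have "T * Mr = B * (A * (transpose_mat (R * B) * minv (R * G * transpose_mat R)))"
    unfolding T_def Mr_def using dims dimA by (simp add: assoc_mult_mat_dims transpose_mult_dims gram(4))
  then have TMr: "T * Mr = 0\<^sub>m d r" using ks'(5) dims dimA by simp
  have "P + Mr * R = 1\<^sub>m d" unfolding P_def by (rule eq_matI) (use Mr R in auto)
  then have "T = T * (P + Mr * R)" using T by simp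
  also have "\<dots> = T * P + T * (Mr * R)" by (rule mult_add_distrib_mat[OF T P mult_carrier_mat[OF Mr R]])
  also have "T * P = P" using assoc_mult_mat[OF T ks'(2), of "L * P" d, symmetric] BLP TB ks'(3) P by simp
  also have "T * (Mr * R) = 0\<^sub>m d d" using assoc_mult_mat[OF T Mr R, symmetric] TMr R by simp
  finally have "T = P" using P by simp
  then show ?thesis unfolding T_def P_def Mr_def A_def G_def by simp
qed

lemma rls_cov_full_eq_ehw_null_space_basis:
  fixes chi R :: "real mat"
  assumes ks: "kernel_split R Sr B L" and R: "R \<in> carrier_mat r d"
    and chi: "chi \<in> carrier_mat n d" and det: "det (transpose_mat chi * chi) \<noteq> 0"
    and Y: "Y \<in> carrier_vec n"
  shows "rls_cov_full chi Y R = B * ehw (chi * B) Y * transpose_mat B"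
proof -
  define k where "k = dim_col B"
  note ks' = kernel_splitD[OF ks R, folded k_def]
  define H where "H = transpose_mat chi * chi"
  define G where "G = minv H"
  define X where "X = chi * B"
  define A where "A = minv (transpose_mat X * X)"
  note gram = gram_minv[OF chi det, folded H_def, folded G_def]
  have X: "X \<in> carrier_mat n k" unfolding X_def using chi ks' by simp
  have XtX: "transpose_mat X * X \<in> carrier_mat k k" using X by (auto intro!: carrier_matI)
  have detX: "det (transpose_mat X * X) \<noteq> 0"
    unfolding X_def by (rule det_gram_mult_nonzero[OF chi det ks'(2,3,6)])
  have Hsym: "transpose_mat H = H" unfolding H_def using chi by (simp add: transpose_mult_dims)
  have Asym: "transpose_mat A = A" unfolding A_def
    by (rule minv_symmetric[OF XtX detX]) (use X in \<open>simp add: transpose_mult_dims\<close>)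
  note dims = carrier_matD[OF chi] carrier_matD[OF ks'(2)] carrier_matD[OF gram(1)]
    carrier_matD[OF gram(2)] carrier_matD[OF minv_carrier[OF XtX, folded A_def]]
  have res: "Y - chi *\<^sub>v rls chi Y R = Y - X *\<^sub>v ols X Y"
  proof -
    have "ols X Y \<in> carrier_vec k" by (rule ols_carrier[OF X])
    then show ?thesis
      unfolding rls_eq_ols_null_space_basis[OF ks R chi det Y] X_def using chi ks' by simp
  qed
  define D where "D = mat_diag n (\<lambda>i. ((Y - X *\<^sub>v ols X Y) $ i)\<^sup>2)"
  have dimD: "dim_row D = n" "dim_col D = n" unfolding D_def mat_diag_def by simp_all
  have "rls_cov_full chi Y R
      = (B * A * transpose_mat B * H) * (G * transpose_mat chi * D * chi * G)
          * transpose_mat (B * A * transpose_mat B * H)"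
    unfolding rls_cov_full_def Let_def res carrier_matD[OF chi]
    unfolding rls_projector_eq[OF ks R chi det]
    unfolding H_def[symmetric] G_def[symmetric] X_def[symmetric]
    unfolding A_def[symmetric] D_def[symmetric] ..
  also have "\<dots> = B * (A * transpose_mat X * D * X * A) * transpose_mat B"
    unfolding X_def using dims dimD Hsym Asym
    by (simp add: assoc_mult_mat_dims transpose_mult_dims gram(4,5))
  also have "A * transpose_mat X * D * X * A = ehw X Y"
    unfolding ehw_def Let_def A_def D_def using X by simp
  finally show ?thesis unfolding X_def .
qed

section \<open>Block-diagonal matrices and Kronecker products with the identity\<close>

definition block_diag_mat :: "real mat \<Rightarrow> real mat \<Rightarrow> real mat" where
  "block_diag_mat A D = four_block_mat A (0\<^sub>m (dim_row A) (dim_col D)) (0\<^sub>m (dim_row D) (dim_col A)) D"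

lemma block_diag_mat_carrier [simp]:
  "block_diag_mat A D \<in> carrier_mat (dim_row A + dim_row D) (dim_col A + dim_col D)"
  unfolding block_diag_mat_def by simp

lemma dim_block_diag_mat [simp]:
  "dim_row (block_diag_mat A D) = dim_row A + dim_row D"
  "dim_col (block_diag_mat A D) = dim_col A + dim_col D"
  unfolding block_diag_mat_def by simp_all

lemma index_block_diag_mat:
  "i < dim_row A + dim_row D \<Longrightarrow> j < dim_col A + dim_col D \<Longrightarrow>
   block_diag_mat A D $$ (i, j) =
     (if i < dim_row A then if j < dim_col A then A $$ (i, j) else 0
      else if j < dim_col A then 0 else D $$ (i - dim_row A, j - dim_col A))"
  unfolding block_diag_mat_def by simp

lemma block_diag_mat_mult:
  "dim_col A1 = dim_row A2 \<Longrightarrow> dim_col D1 = dim_row D2 \<Longrightarrow>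
   block_diag_mat A1 D1 * block_diag_mat A2 D2 = block_diag_mat (A1 * A2) (D1 * D2)"
  unfolding block_diag_mat_def
  by (subst mult_four_block_mat[of A1 "dim_row A1" "dim_col A1" _ "dim_col D1" _ "dim_row D1" D1
        A2 "dim_col A2" _ "dim_col D2" _ D2]) auto

lemma block_diag_mat_add:
  "dim_row A1 = dim_row A2 \<Longrightarrow> dim_col A1 = dim_col A2 \<Longrightarrow>
   dim_row D1 = dim_row D2 \<Longrightarrow> dim_col D1 = dim_col D2 \<Longrightarrow>
   block_diag_mat A1 D1 + block_diag_mat A2 D2 = block_diag_mat (A1 + A2) (D1 + D2)"
  by (rule eq_matI) (auto simp: index_block_diag_mat)

lemma block_diag_mat_one: "block_diag_mat (1\<^sub>m a) (1\<^sub>m b) = 1\<^sub>m (a + b)"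
  unfolding block_diag_mat_def by simp

lemma block_diag_mat_zero: "block_diag_mat (0\<^sub>m a b) (0\<^sub>m c d) = 0\<^sub>m (a + c) (b + d)"
  unfolding block_diag_mat_def by simp

text \<open>\<open>kron_id J M = M \<otimes> I\<^sub>J\<close>; index \<open>i\<close> stands for the pair \<open>(i div J, i mod J)\<close>, as in the
  layout of \<open>\<theta>\<^sub>\<gamma>\<close>.\<close>

definition kron_id :: "nat \<Rightarrow> real mat \<Rightarrow> real mat" where
  "kron_id J M = mat (dim_row M * J) (dim_col M * J)
     (\<lambda>(i, j). if i mod J = j mod J then M $$ (i div J, j div J) else 0)"

lemma dim_kron_id [simp]:
  "dim_row (kron_id J M) = dim_row M * J" "dim_col (kron_id J M) = dim_col M * J"
  unfolding kron_id_def by simp_all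

lemma index_kron_id [simp]:
  "i < dim_row M * J \<Longrightarrow> j < dim_col M * J \<Longrightarrow>
   kron_id J M $$ (i, j) = (if i mod J = j mod J then M $$ (i div J, j div J) else 0)"
  unfolding kron_id_def by simp

lemma div_less_of_less_mult [simp]: "i < b * J \<Longrightarrow> i div J < (b :: nat)"
  by (simp add: less_mult_imp_div_less)

lemma sum_atLeast0LessThan_add:
  "(\<Sum>t\<in>{0..<a + b}. f t) = (\<Sum>t\<in>{0..<a}. f t) + (\<Sum>u\<in>{0..<b}. f (a + u :: nat))"
  for f :: "nat \<Rightarrow> real"
proof -
  have "(\<Sum>t\<in>{0..<a + b}. f t) = (\<Sum>t\<in>{0..<a}. f t) + (\<Sum>t\<in>{a..<a + b}. f t)"
    by (rule sum.atLeastLessThan_concat[symmetric]) auto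
  also have "(\<Sum>t\<in>{a..<a + b}. f t) = (\<Sum>u\<in>{0..<b}. f (u + a))"
    using sum.shift_bounds_nat_ivl[of f 0 a b] by (simp add: add.commute)
  finally show ?thesis by (simp add: add.commute)
qed

lemma sum_blocks:
  "(\<Sum>t\<in>{0..<b * J}. f t) = (\<Sum>s\<in>{0..<b}. \<Sum>u\<in>{0..<J}. f (s * J + u :: nat))"
  for f :: "nat \<Rightarrow> real"
proof -
  have "(\<Sum>t\<in>{0..<b * J}. f t) = (\<Sum>s<b. \<Sum>t\<in>{s * J..<s * J + J}. f t)"
    using sum.nat_group[of f J b] by (simp add: atLeast0LessThan)
  also have "\<dots> = (\<Sum>s<b. \<Sum>u\<in>{0..<J}. f (s * J + u))"
  proof (rule sum.cong)
    fix s show "(\<Sum>t\<in>{s * J..<s * J + J}. f t) = (\<Sum>u\<in>{0..<J}. f (s * J + u))"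
      using sum.shift_bounds_nat_ivl[of f 0 "s * J" J] by (simp add: add.commute)
  qed simp
  finally show ?thesis by (simp add: atLeast0LessThan)
qed

lemma block_index_less: "s < b \<Longrightarrow> u < J \<Longrightarrow> s * J + u < b * (J :: nat)"
proof -
  assume "s < b" "u < J"
  then have "s * J + u < (s + 1) * J" and "(s + 1) * J \<le> b * J"
    by (simp, intro mult_le_mono1) simp_all
  then show ?thesis by linarith
qed

lemma kron_id_mult:
  assumes "dim_col M1 = dim_row M2"
  shows "kron_id J M1 * kron_id J M2 = kron_id J (M1 * M2)"
proof (rule eq_matI)
  fix i j assume "i < dim_row (kron_id J (M1 * M2))" "j < dim_col (kron_id J (M1 * M2))"
  then have i: "i < dim_row M1 * J" and j: "j < dim_col M2 * J" by auto
  then have J: "J > 0" by (cases J) auto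
  let ?b = "dim_col M1"
  let ?e = "\<lambda>s. if i mod J = j mod J then M1 $$ (i div J, s) * M2 $$ (s, j div J) else 0"
  have "(kron_id J M1 * kron_id J M2) $$ (i, j) =
      (\<Sum>t\<in>{0..<?b * J}. kron_id J M1 $$ (i, t) * kron_id J M2 $$ (t, j))"
    using i j assms by (simp add: scalar_prod_def)
  also have "\<dots> =
      (\<Sum>s\<in>{0..<?b}. \<Sum>u\<in>{0..<J}. kron_id J M1 $$ (i, s * J + u) * kron_id J M2 $$ (s * J + u, j))"
    by (rule sum_blocks)
  also have "\<dots> = (\<Sum>s\<in>{0..<?b}. \<Sum>u\<in>{0..<J}. if u = i mod J then ?e s else 0)"
  proof (intro sum.cong refl)
    fix s u assume "s \<in> {0..<?b}" "u \<in> {0..<J}"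
    then have "s * J + u < ?b * J" "(s * J + u) mod J = u" "(s * J + u) div J = s"
      using block_index_less J by auto
    then show "kron_id J M1 $$ (i, s * J + u) * kron_id J M2 $$ (s * J + u, j) =
        (if u = i mod J then ?e s else 0)"
      using i j assms by auto
  qed
  also have "\<dots> = kron_id J (M1 * M2) $$ (i, j)"
    using i j assms J by (simp add: sum.delta scalar_prod_def)
  finally show "(kron_id J M1 * kron_id J M2) $$ (i, j) = kron_id J (M1 * M2) $$ (i, j)" .
qed auto

lemma kron_id_add:
  "dim_row M1 = dim_row M2 \<Longrightarrow> dim_col M1 = dim_col M2 \<Longrightarrow>
   kron_id J M1 + kron_id J M2 = kron_id J (M1 + M2)"
  by (rule eq_matI) auto

lemma kron_id_one: "kron_id J (1\<^sub>m n) = 1\<^sub>m (n * J)"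
proof (rule eq_matI)
  fix i j assume "i < dim_row (1\<^sub>m (n * J))" "j < dim_col (1\<^sub>m (n * J))"
  then have i: "i < n * J" and j: "j < n * J" by auto
  have "(i mod J = j mod J \<and> i div J = j div J) = (i = j)" by (metis div_mult_mod_eq)
  then show "kron_id J (1\<^sub>m n) $$ (i, j) = 1\<^sub>m (n * J) $$ (i, j)" using i j by auto
qed auto

lemma kron_id_zero: "kron_id J (0\<^sub>m a b) = 0\<^sub>m (a * J) (b * J)"
  by (rule eq_matI) auto

lemma kernel_split_block_diag_mat:
  assumes ks1: "kernel_split R1 S1 B1 L1" and ks2: "kernel_split R2 S2 B2 L2"
  shows "kernel_split (block_diag_mat R1 R2) (block_diag_mat S1 S2) (block_diag_mat B1 B2)
    (block_diag_mat L1 L2)"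
proof -
  obtain r1 d1 k1 r2 d2 k2 where R1: "R1 \<in> carrier_mat r1 d1" and k1: "k1 = dim_col B1"
    and R2: "R2 \<in> carrier_mat r2 d2" and k2: "k2 = dim_col B2" using carrier_mat_triv by blast
  note a = kernel_splitD[OF ks1 R1, folded k1] and b = kernel_splitD[OF ks2 R2, folded k2]
  note dims = carrier_matD[OF R1] carrier_matD[OF R2] carrier_matD[OF a(1)] carrier_matD[OF a(2)]
    carrier_matD[OF a(3)] carrier_matD[OF b(1)] carrier_matD[OF b(2)] carrier_matD[OF b(3)]
  show ?thesis
  proof (rule kernel_splitI[of _ "r1 + r2" "d1 + d2" _ _ "k1 + k2"])
    show "block_diag_mat B1 B2 * block_diag_mat L1 L2 + block_diag_mat S1 S2 * block_diag_mat R1 R2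
        = 1\<^sub>m (d1 + d2)"
      using dims by (simp add: block_diag_mat_mult block_diag_mat_add a(7) b(7) block_diag_mat_one)
  qed (use dims a b in \<open>auto simp: block_diag_mat_mult block_diag_mat_one block_diag_mat_zero
         intro!: carrier_matI\<close>)
qed

lemma kernel_split_kron_id:
  assumes ks: "kernel_split R S B L"
  shows "kernel_split (kron_id J R) (kron_id J S) (kron_id J B) (kron_id J L)"
proof -
  obtain r d k where R: "R \<in> carrier_mat r d" and k: "k = dim_col B" using carrier_mat_triv by blast
  note a = kernel_splitD[OF ks R, folded k]
  note dims = carrier_matD[OF R] carrier_matD[OF a(1)] carrier_matD[OF a(2)] carrier_matD[OF a(3)]
  show ?thesis
  proof (rule kernel_splitI[of _ "r * J" "d * J" _ _ "k * J"])
    show "kron_id J B * kron_id J L + kron_id J S * kron_id J R = 1\<^sub>m (d * J)"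
      using dims by (simp add: kron_id_mult kron_id_add a(7) kron_id_one)
  qed (use dims a in \<open>auto simp: kron_id_mult kron_id_one kron_id_zero intro!: carrier_matI\<close>)
qed

section \<open>Factorial contrasts\<close>

text \<open>\<open>contrast_sign K S\<close> is \<open>2^(K-1) c\<^sub>S\<close>.\<close>

definition contrast_sign :: "nat \<Rightarrow> nat set \<Rightarrow> nat \<Rightarrow> real" where
  "contrast_sign K S q = (\<Prod>k\<in>S. lvl_z K q k)"

lemma lvl_z_cases: "lvl_z K q k = 1 \<or> lvl_z K q k = -1"
  unfolding lvl_z_def by auto

lemma lvl_z_Suc:
  assumes "k < Suc K"
  shows "lvl_z (Suc K) q k = (if k = K then if odd q then 1 else -1 else lvl_z K (q div 2) k)"
proof (cases "k = K")
  case False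
  then have "Suc K - 1 - k = Suc (K - 1 - k)" using assms by auto
  then have "q div 2 ^ (Suc K - 1 - k) = q div 2 div 2 ^ (K - 1 - k)" by (simp add: div_mult2_eq)
  then show ?thesis using False by (simp add: lvl_z_def)
qed (simp add: lvl_z_def)

lemma sum_lessThan_double: "(\<Sum>q<2 * n. f q) = (\<Sum>q<n. f (2 * q) + f (2 * q + 1))"
  for f :: "nat \<Rightarrow> real"
  by (induction n) (auto simp: sum.distrib)

lemma sum_levels_prod_lvl_z:
  "(\<Sum>q<2 ^ K. \<Prod>k<K. f k (lvl_z K q k)) = (\<Prod>k<K. f k 1 + f k (-1))"
  for f :: "nat \<Rightarrow> real \<Rightarrow> real"
proof (induction K arbitrary: f)
  case (Suc K)
  let ?g = "\<lambda>q. (\<Prod>k<K. f k (lvl_z K (q div 2) k)) * f K (if odd q then 1 else -1)"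
  have "(\<Sum>q<2 ^ Suc K. \<Prod>k<Suc K. f k (lvl_z (Suc K) q k)) = (\<Sum>q<2 * 2 ^ K. ?g q)"
    by (simp add: lvl_z_Suc)
  also have "\<dots> = (\<Sum>q<2 ^ K. (\<Prod>k<K. f k (lvl_z K q k)) * (f K 1 + f K (-1)))"
    unfolding sum_lessThan_double by (simp add: algebra_simps)
  also have "\<dots> = (\<Prod>k<Suc K. f k 1 + f k (-1))"
    unfolding sum_distrib_right[symmetric] Suc by simp
  finally show ?case .
qed simp

lemma contrast_sign_orthogonal:
  assumes "S \<subseteq> {..<K}" and "T \<subseteq> {..<K}"
  shows "(\<Sum>q<2 ^ K. contrast_sign K S q * contrast_sign K T q) = (if S = T then 2 ^ K else 0)"
proof -
  let ?f = "\<lambda>k z. (if k \<in> S then z else 1) * (if k \<in> T then z else (1 :: real))"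
  have "contrast_sign K U q = (\<Prod>k<K. if k \<in> U then lvl_z K q k else 1)" if "U \<subseteq> {..<K}" for U q
    unfolding contrast_sign_def using prod.inter_restrict[of "{..<K}" "lvl_z K q" U] that
    by (simp add: Int_absorb1)
  then have "(\<Sum>q<2 ^ K. contrast_sign K S q * contrast_sign K T q)
      = (\<Sum>q<2 ^ K. \<Prod>k<K. ?f k (lvl_z K q k))"
    using assms by (simp add: prod.distrib)
  also have "\<dots> = (\<Prod>k<K. ?f k 1 + ?f k (-1))" by (rule sum_levels_prod_lvl_z)
  also have "\<dots> = (if S = T then 2 ^ K else 0)"
  proof (cases "S = T")
    case False
    then obtain k where "k \<in> S \<and> k \<notin> T \<or> k \<in> T \<and> k \<notin> S" by blast
    then have "k < K" and "?f k 1 + ?f k (-1) = 0" using assms by auto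
    then show ?thesis using False by (subst prod.remove[of _ k]) auto
  next
    case True
    then have "\<And>k. ?f k 1 + ?f k (-1) = 2" by auto
    then show ?thesis using True by simp
  qed
  finally show ?thesis .
qed

lemma lvl_z_inj:
  assumes "q < 2 ^ K" "q' < 2 ^ K" and "\<forall>k<K. lvl_z K q k = lvl_z K q' k"
  shows "q = q'"
  using assms
proof (induction K arbitrary: q q')
  case (Suc K)
  have "\<forall>k<K. lvl_z K (q div 2) k = lvl_z K (q' div 2) k"
  proof (intro allI impI)
    fix k assume k: "k < K"
    then have "lvl_z (Suc K) q k = lvl_z (Suc K) q' k" using Suc.prems(3) by auto
    then show "lvl_z K (q div 2) k = lvl_z K (q' div 2) k" using k by (simp add: lvl_z_Suc)
  qed
  then have "q div 2 = q' div 2" using Suc.IH[of "q div 2" "q' div 2"] Suc.prems(1,2) by auto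
  moreover have "odd q \<longleftrightarrow> odd q'"
    using Suc.prems(3)[rule_format, of K] by (auto simp: lvl_z_Suc split: if_splits)
  ultimately show ?case by (metis div_mult_mod_eq odd_iff_mod_2_eq_one even_iff_mod_2_eq_zero)
qed simp

lemma contrast_sign_complete:
  assumes "q < 2 ^ K" and "q' < 2 ^ K"
  shows "(\<Sum>S\<in>Pow {..<K}. contrast_sign K S q * contrast_sign K S q') = (if q = q' then 2 ^ K else 0)"
proof -
  let ?a = "\<lambda>k. lvl_z K q k * lvl_z K q' k"
  have "(\<Sum>S\<in>Pow {..<K}. contrast_sign K S q * contrast_sign K S q')
      = (\<Sum>S\<in>Pow {..<K}. (\<Prod>k\<in>S. ?a k) * (\<Prod>k\<in>{..<K} - S. 1))"
    by (simp add: contrast_sign_def prod.distrib)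
  also have "\<dots> = (\<Prod>k<K. ?a k + 1)" by (rule prod_add[symmetric]) simp
  also have "\<dots> = (if q = q' then 2 ^ K else 0)"
  proof (cases "q = q'")
    case True
    have "lvl_z K q k * lvl_z K q k = 1" for k using lvl_z_cases[of K q k] by auto
    then show ?thesis using True by simp
  next
    case False
    then obtain k where k: "k < K" "lvl_z K q k \<noteq> lvl_z K q' k" using lvl_z_inj assms by blast
    then have "?a k + 1 = 0" using lvl_z_cases[of K q k] lvl_z_cases[of K q' k] by auto
    then show ?thesis using k False by (subst prod.remove[of _ k]) auto
  qed
  finally show ?thesis .
qed

lemma level_of_signs:
  fixes b :: "nat \<Rightarrow> bool"
  defines "v K \<equiv> (\<Sum>k<K. if b k then 2 ^ (K - 1 - k) else 0 :: nat)"
  shows "v K < 2 ^ K \<and> (\<forall>k<K. lvl_z K (v K) k = (if b k then 1 else -1))"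
proof (induction K)
  case (Suc K)
  have "(\<Sum>k<K. if b k then 2 ^ (Suc K - 1 - k) else 0 :: nat) = 2 * v K"
    unfolding v_def sum_distrib_left
    by (rule sum.cong) (auto simp: Suc_diff_Suc[symmetric] simp del: Suc_diff_Suc)
  then have rec: "v (Suc K) = 2 * v K + (if b K then 1 else 0)" unfolding v_def by simp
  then have "v (Suc K) div 2 = v K" and "odd (v (Suc K)) = b K" by auto
  then show ?case using Suc.IH unfolding rec by (auto simp: lvl_z_Suc)
qed (simp add: v_def)

lemma unit_level_less:
  "(\<And>k. k < K \<Longrightarrow> Z i k = 1 \<or> Z i k = -1) \<Longrightarrow> unit_level K Z i < 2 ^ K"
  using level_of_signs[of "\<lambda>k. Z i k = 1" K] unfolding unit_level_def by blast

lemma lvl_z_unit_level: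
  "(\<And>k. k < K \<Longrightarrow> Z i k = 1 \<or> Z i k = -1) \<Longrightarrow> k < K \<Longrightarrow> lvl_z K (unit_level K Z i) k = Z i k"
  using level_of_signs[of "\<lambda>k. Z i k = 1" K] unfolding unit_level_def by fastforce

lemma contrast_sign_unit_level:
  "(\<And>k. k < K \<Longrightarrow> Z i k = 1 \<or> Z i k = -1) \<Longrightarrow> S \<subseteq> {..<K} \<Longrightarrow>
   contrast_sign K S (unit_level K Z i) = Zprod Z i S"
  unfolding contrast_sign_def Zprod_def by (intro prod.cong) (auto simp: lvl_z_unit_level)

definition contrast_mat :: "nat \<Rightarrow> nat set list \<Rightarrow> real mat" where
  "contrast_mat K Ss = mat (2 ^ K) (length Ss) (\<lambda>(q, a). contrast_sign K (Ss ! a) q)"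

lemma contrast_mat_carrier [simp]: "contrast_mat K Ss \<in> carrier_mat (2 ^ K) (length Ss)"
  unfolding contrast_mat_def by simp

lemma dim_contrast_mat [simp]:
  "dim_row (contrast_mat K Ss) = 2 ^ K" "dim_col (contrast_mat K Ss) = length Ss"
  unfolding contrast_mat_def by simp_all

lemma index_contrast_mat [simp]:
  "q < 2 ^ K \<Longrightarrow> a < length Ss \<Longrightarrow> contrast_mat K Ss $$ (q, a) = contrast_sign K (Ss ! a) q"
  unfolding contrast_mat_def by simp

lemma Cmat_eq_contrast_mat: "Cmat K Fs = (1 / 2 ^ (K - 1)) \<cdot>\<^sub>m transpose_mat (contrast_mat K Fs)"
  unfolding Cmat_def cvec_def by (rule eq_matI) (auto simp: contrast_sign_def)

lemma contrast_mat_orthogonal: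
  assumes "\<forall>S\<in>set Ss. S \<subseteq> {..<K}" and "\<forall>S\<in>set Ts. S \<subseteq> {..<K}"
  shows "transpose_mat (contrast_mat K Ss) * contrast_mat K Ts =
    mat (length Ss) (length Ts) (\<lambda>(a, b). if Ss ! a = Ts ! b then 2 ^ K else 0)"
proof (rule eq_matI)
  fix a b assume "a < dim_row (mat (length Ss) (length Ts)
      (\<lambda>(a, b). if Ss ! a = Ts ! b then 2 ^ K else (0 :: real)))"
    "b < dim_col (mat (length Ss) (length Ts) (\<lambda>(a, b). if Ss ! a = Ts ! b then 2 ^ K else (0 :: real)))"
  then have a: "a < length Ss" and b: "b < length Ts" by auto
  then show "(transpose_mat (contrast_mat K Ss) * contrast_mat K Ts) $$ (a, b) =
      mat (length Ss) (length Ts) (\<lambda>(a, b). if Ss ! a = Ts ! b then 2 ^ K else 0) $$ (a, b)"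
    using contrast_sign_orthogonal[of "Ss ! a" K "Ts ! b"] assms
    by (simp add: scalar_prod_def atLeast0LessThan)
qed auto

lemma contrast_mat_orthogonal_self:
  assumes "\<forall>S\<in>set Ss. S \<subseteq> {..<K}" and "distinct Ss"
  shows "transpose_mat (contrast_mat K Ss) * contrast_mat K Ss = 2 ^ K \<cdot>\<^sub>m 1\<^sub>m (length Ss)"
  unfolding contrast_mat_orthogonal[OF assms(1) assms(1)]
  by (rule eq_matI) (use assms(2) in \<open>auto simp: nth_eq_iff_index_eq\<close>)

lemma contrast_mat_orthogonal_disjoint:
  assumes "\<forall>S\<in>set Ss. S \<subseteq> {..<K}" and "\<forall>S\<in>set Ts. S \<subseteq> {..<K}" and "set Ss \<inter> set Ts = {}"
  shows "transpose_mat (contrast_mat K Ss) * contrast_mat K Ts = 0\<^sub>m (length Ss) (length Ts)"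
  unfolding contrast_mat_orthogonal[OF assms(1,2)]
  by (rule eq_matI) (use assms(3) in \<open>auto dest: nth_mem\<close>)

lemma contrast_mat_complete:
  assumes "distinct (Ss @ Ts)" and "set Ss \<union> set Ts = Pow {..<K}"
  shows "contrast_mat K Ss * transpose_mat (contrast_mat K Ss) + contrast_mat K Ts * transpose_mat (contrast_mat K Ts)
    = 2 ^ K \<cdot>\<^sub>m 1\<^sub>m (2 ^ K)"
proof (rule eq_matI)
  fix q q' assume "q < dim_row (2 ^ K \<cdot>\<^sub>m 1\<^sub>m (2 ^ K) :: real mat)"
    "q' < dim_col (2 ^ K \<cdot>\<^sub>m 1\<^sub>m (2 ^ K) :: real mat)"
  then have q: "q < 2 ^ K" and q': "q' < 2 ^ K" by auto
  let ?f = "\<lambda>S. contrast_sign K S q * contrast_sign K S q'"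
  have sum_list: "(\<Sum>a\<in>{0..<length Us}. ?f (Us ! a)) = (\<Sum>S\<in>set Us. ?f S)" if "distinct Us" for Us
    using sum_list_distinct_conv_sum_set[OF that, of ?f] sum_list_sum_nth[of "map ?f Us"] by simp
  have "(contrast_mat K Ss * transpose_mat (contrast_mat K Ss)
      + contrast_mat K Ts * transpose_mat (contrast_mat K Ts)) $$ (q, q')
      = (\<Sum>S\<in>set Ss. ?f S) + (\<Sum>S\<in>set Ts. ?f S)"
    using q q' assms(1) by (simp add: scalar_prod_def sum_list)
  also have "\<dots> = (\<Sum>S\<in>Pow {..<K}. ?f S)"
    unfolding assms(2)[symmetric] by (rule sum.union_disjoint[symmetric]) (use assms(1) in auto)
  also have "\<dots> = (2 ^ K \<cdot>\<^sub>m 1\<^sub>m (2 ^ K) :: real mat) $$ (q, q')"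
    using contrast_sign_complete[OF q q'] q q' by simp
  finally show "(contrast_mat K Ss * transpose_mat (contrast_mat K Ss)
      + contrast_mat K Ts * transpose_mat (contrast_mat K Ts)) $$ (q, q')
      = (2 ^ K \<cdot>\<^sub>m 1\<^sub>m (2 ^ K) :: real mat) $$ (q, q')" .
qed auto

lemma kernel_split_contrast_mat:
  assumes dist: "distinct (Ts @ Fs)" and cover: "set Ts \<union> set Fs = Pow {..<K}" and "c \<noteq> 0"
  shows "kernel_split (c \<cdot>\<^sub>m transpose_mat (contrast_mat K Fs)) ((1 / (c * 2 ^ K)) \<cdot>\<^sub>m contrast_mat K Fs)
    (contrast_mat K Ts) ((1 / 2 ^ K) \<cdot>\<^sub>m transpose_mat (contrast_mat K Ts))"
proof -
  let ?A = "contrast_mat K Fs" and ?H = "contrast_mat K Ts" and ?Q = "2 ^ K :: real"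
  have sub: "\<forall>S\<in>set Fs. S \<subseteq> {..<K}" "\<forall>S\<in>set Ts. S \<subseteq> {..<K}" using cover by auto
  have AA: "transpose_mat ?A * ?A = ?Q \<cdot>\<^sub>m 1\<^sub>m (length Fs)"
    by (rule contrast_mat_orthogonal_self[OF sub(1)]) (use dist in simp)
  have HH: "transpose_mat ?H * ?H = ?Q \<cdot>\<^sub>m 1\<^sub>m (length Ts)"
    by (rule contrast_mat_orthogonal_self[OF sub(2)]) (use dist in simp)
  have AH: "transpose_mat ?A * ?H = 0\<^sub>m (length Fs) (length Ts)"
    by (rule contrast_mat_orthogonal_disjoint[OF sub]) (use dist in auto)
  have "(1 / ?Q) \<cdot>\<^sub>m (?H * transpose_mat ?H + ?A * transpose_mat ?A) = 1\<^sub>m (2 ^ K)"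
    unfolding contrast_mat_complete[OF dist cover] by (simp add: smult_smult_mat)
  then have compl: "(1 / ?Q) \<cdot>\<^sub>m (?H * transpose_mat ?H) + (1 / ?Q) \<cdot>\<^sub>m (?A * transpose_mat ?A) = 1\<^sub>m (2 ^ K)"
    by (subst (asm) add_smult_distrib_left_mat[of _ "2 ^ K" "2 ^ K"]) auto
  show ?thesis
    by (rule kernel_splitI[of _ "length Fs" "2 ^ K" _ _ "length Ts"])
      (use AA HH AH compl \<open>c \<noteq> 0\<close> in \<open>simp_all add: mult_smult_left_dims mult_smult_right_dims
         smult_smult_mat transpose_smult_mat\<close>)
qed

lemma kernel_split_one_mat:
  assumes "B \<in> carrier_mat n 0" and "L \<in> carrier_mat 0 n"
  shows "kernel_split (1\<^sub>m n) (1\<^sub>m n) B L"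
proof (rule kernel_splitI[of _ n n _ _ 0])
  show "B * L + 1\<^sub>m n * 1\<^sub>m n = 1\<^sub>m n"
    using assms by (intro eq_matI) (auto simp: scalar_prod_def)
qed (use assms in \<open>auto intro!: eq_matI\<close>)

definition diff_mat :: "nat \<Rightarrow> real mat" where
  "diff_mat n = mat (n - 1) n (\<lambda>(a, b). if b = a then 1 else if b = a + 1 then -1 else 0)"

lemma diff_mat_carrier [simp]: "diff_mat n \<in> carrier_mat (n - 1) n"
  unfolding diff_mat_def by simp

lemma dim_diff_mat [simp]: "dim_row (diff_mat n) = n - 1" "dim_col (diff_mat n) = n"
  unfolding diff_mat_def by simp_all

lemma index_diff_mat_mult:
  assumes "dim_row M = n" and "a < n - 1" and "j < dim_col M"
  shows "(diff_mat n * M) $$ (a, j) = M $$ (a, j) - M $$ (a + 1, j)"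
proof -
  have "a + 1 < n" using assms(2) by linarith
  have "(diff_mat n * M) $$ (a, j) =
      (\<Sum>b\<in>{0..<n}. (if b = a then M $$ (a, j) else 0) - (if b = a + 1 then M $$ (a + 1, j) else 0))"
    using assms \<open>a + 1 < n\<close> unfolding diff_mat_def by (auto simp: scalar_prod_def intro!: sum.cong)
  also have "\<dots> = M $$ (a, j) - M $$ (a + 1, j)" using \<open>a + 1 < n\<close> by (simp add: sum_subtractf)
  finally show ?thesis .
qed

lemma index_mult_diff_mat:
  assumes "dim_col M = n - 1" and "q < dim_row M" and "b < n"
  shows "(M * diff_mat n) $$ (q, b) =
    (if b + 1 < n then M $$ (q, b) else 0) - (if 0 < b then M $$ (q, b - 1) else 0)"
proof -
  have "(M * diff_mat n) $$ (q, b) =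
      (\<Sum>a\<in>{0..<n - 1}. (if a = b then M $$ (q, b) else 0) - (if a = b - 1 \<and> 0 < b then M $$ (q, b - 1) else 0))"
    using assms unfolding diff_mat_def by (auto simp: scalar_prod_def intro!: sum.cong)
  also have "\<dots> = (if b + 1 < n then M $$ (q, b) else 0) - (if 0 < b then M $$ (q, b - 1) else 0)"
    using assms by (auto simp: sum_subtractf)
  finally show ?thesis .
qed

text \<open>The null space of the difference matrix consists of the constant vectors; the right inverse
  recovers a vector with first coordinate 0 from its differences.\<close>

lemma kernel_split_diff_mat:
  assumes "0 < n"
  shows "kernel_split (diff_mat n) (mat n (n - 1) (\<lambda>(q, a). if a < q then -1 else 0))
    (mat n 1 (\<lambda>_. 1)) (mat 1 n (\<lambda>(_, q). if q = 0 then 1 else 0))"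
proof (rule kernel_splitI[of _ "n - 1" n _ _ 1])
  show "diff_mat n * mat n (n - 1) (\<lambda>(q, a). if a < q then -1 else 0) = 1\<^sub>m (n - 1)"
    by (rule eq_matI) (auto simp: index_diff_mat_mult simp del: index_mult_mat(1))
  show "diff_mat n * mat n 1 (\<lambda>_. 1) = 0\<^sub>m (n - 1) 1"
    by (rule eq_matI) (auto simp: index_diff_mat_mult simp del: index_mult_mat(1))
  show "mat 1 n (\<lambda>(_, q). if q = 0 then 1 else 0) * mat n 1 (\<lambda>_. 1) = (1\<^sub>m 1 :: real mat)"
    using assms by (intro eq_matI) (auto simp: scalar_prod_def sum.delta)
  show "mat n 1 (\<lambda>_. 1) * mat 1 n (\<lambda>(_, q). if q = 0 then 1 else 0)
      + mat n (n - 1) (\<lambda>(q, a). if a < q then -1 else 0) * diff_mat n = 1\<^sub>m n"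
  proof (rule eq_matI)
    fix q b assume "q < dim_row (1\<^sub>m n :: real mat)" "b < dim_col (1\<^sub>m n :: real mat)"
    then have "q < n" "b < n" by auto
    moreover have "(mat n 1 (\<lambda>_. 1) * mat 1 n (\<lambda>(_, q). if q = 0 then 1 else 0)) $$ (q, b)
        = (if b = 0 then 1 else (0 :: real))"
      using \<open>q < n\<close> \<open>b < n\<close> by (simp add: scalar_prod_def)
    moreover have "(mat n (n - 1) (\<lambda>(q, a). if a < q then -1 else 0) * diff_mat n) $$ (q, b)
        = (if b + 1 < n then if b < q then -1 else 0 else 0) - (if 0 < b then if b - 1 < q then -1 else 0 else 0)"
      using \<open>q < n\<close> \<open>b < n\<close> by (subst index_mult_diff_mat) auto
    ultimately show "(mat n 1 (\<lambda>_. 1) * mat 1 n (\<lambda>(_, q). if q = 0 then 1 else 0)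
      + mat n (n - 1) (\<lambda>(q, a). if a < q then -1 else 0) * diff_mat n) $$ (q, b) = 1\<^sub>m n $$ (q, b)"
      by auto
  qed auto
qed (use assms in auto)

section \<open>The design matrices as products with \<open>\<chi>\<^sub>L\<close>\<close>

lemma dim_chiL [simp]:
  "dim_row (chiL K N J Z x) = N" "dim_col (chiL K N J Z x) = 2 ^ K + 2 ^ K * J"
  unfolding chiL_def by simp_all

lemma sum_tind:
  assumes "unit_level K Z i < 2 ^ K"
  shows "(\<Sum>t\<in>{0..<2 ^ K}. tind K Z i t * f t) = (f (unit_level K Z i) :: real)"
proof -
  have "(\<Sum>t\<in>{0..<2 ^ K}. tind K Z i t * f t)
      = (\<Sum>t\<in>{0..<2 ^ K}. if t = unit_level K Z i then f (unit_level K Z i) else 0)"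
    unfolding tind_def by (rule sum.cong) auto
  then show ?thesis using assms by (simp add: sum.delta)
qed

text \<open>Row \<open>i\<close> of \<open>\<chi>\<^sub>L\<close> is \<open>(e\<^sub>l, e\<^sub>l \<otimes> x\<^sub>i)\<close>, where \<open>l\<close> is the treatment level of unit \<open>i\<close>.\<close>

lemma index_chiL_mult:
  assumes "i < N" and l: "unit_level K Z i < 2 ^ K"
    and "dim_row M = 2 ^ K + 2 ^ K * J" and "c < dim_col M"
  shows "(chiL K N J Z x * M) $$ (i, c) = M $$ (unit_level K Z i, c)
    + (\<Sum>v\<in>{0..<J}. x i v * M $$ (2 ^ K + unit_level K Z i * J + v, c))"
proof -
  let ?l = "unit_level K Z i" and ?Q = "2 ^ K :: nat"
  have chi: "chiL K N J Z x $$ (i, t) =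
      (if t < ?Q then tind K Z i t else tind K Z i ((t - ?Q) div J) * x i ((t - ?Q) mod J))"
    if "t < ?Q + ?Q * J" for t
    using that \<open>i < N\<close> by (simp add: chiL_def)
  have "(chiL K N J Z x * M) $$ (i, c) = (\<Sum>t\<in>{0..<?Q + ?Q * J}. chiL K N J Z x $$ (i, t) * M $$ (t, c))"
    using assms by (simp add: chiL_def scalar_prod_def)
  also have "\<dots> = (\<Sum>t\<in>{0..<?Q}. chiL K N J Z x $$ (i, t) * M $$ (t, c))
      + (\<Sum>s\<in>{0..<?Q}. \<Sum>v\<in>{0..<J}. chiL K N J Z x $$ (i, ?Q + (s * J + v)) * M $$ (?Q + (s * J + v), c))"
    unfolding sum_atLeast0LessThan_add sum_blocks ..
  also have "\<dots> = (\<Sum>t\<in>{0..<?Q}. tind K Z i t * M $$ (t, c))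
      + (\<Sum>s\<in>{0..<?Q}. \<Sum>v\<in>{0..<J}. tind K Z i s * x i v * M $$ (?Q + (s * J + v), c))"
    by (intro arg_cong2[where f = "(+)"] sum.cong refl) (simp_all add: chi block_index_less)
  also have "(\<Sum>s\<in>{0..<?Q}. \<Sum>v\<in>{0..<J}. tind K Z i s * x i v * M $$ (?Q + (s * J + v), c))
      = (\<Sum>s\<in>{0..<?Q}. tind K Z i s * (\<Sum>v\<in>{0..<J}. x i v * M $$ (?Q + (s * J + v), c)))"
    by (simp add: sum_distrib_left mult.assoc)
  finally show ?thesis unfolding sum_tind[OF l] by (simp add: add.assoc)
qed

text \<open>Columns \<open>h\<^sub>S\<close> for \<open>S\<close> in \<open>Ts\<close>, then \<open>h\<^sub>S \<otimes> e\<^sub>j\<close> for \<open>S\<close> in \<open>Us\<close> and \<open>j < J\<close>,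
  where \<open>h\<^sub>S\<close> is the vector of contrast signs.\<close>

definition factor_basis :: "nat \<Rightarrow> nat \<Rightarrow> nat set list \<Rightarrow> nat set list \<Rightarrow> real mat" where
  "factor_basis K J Ts Us = block_diag_mat (contrast_mat K Ts) (kron_id J (contrast_mat K Us))"

lemma dim_factor_basis [simp]:
  "dim_row (factor_basis K J Ts Us) = 2 ^ K + 2 ^ K * J"
  "dim_col (factor_basis K J Ts Us) = length Ts + length Us * J"
  unfolding factor_basis_def by simp_all

lemma factor_basis_carrier:
  "factor_basis K J Ts Us \<in> carrier_mat (2 ^ K + 2 ^ K * J) (length Ts + length Us * J)"
  by (simp add: carrier_matI)

lemma chiL_mult_factor_basis:
  assumes Z: "\<forall>i<N. \<forall>k<K. Z i k = 1 \<or> Z i k = -1"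
    and Ts: "\<forall>S\<in>set Ts. S \<subseteq> {..<K}" and Us: "\<forall>S\<in>set Us. S \<subseteq> {..<K}"
  shows "chiL K N J Z x * factor_basis K J Ts Us = mat N (length Ts + length Us * J) (\<lambda>(i, c).
     if c < length Ts then Zprod Z i (Ts ! c)
     else Zprod Z i (Us ! ((c - length Ts) div J)) * x i ((c - length Ts) mod J))"
    (is "_ = ?X")
proof (rule eq_matI)
  fix i c assume "i < dim_row ?X" "c < dim_col ?X"
  then have i: "i < N" and c: "c < length Ts + length Us * J" by auto
  let ?l = "unit_level K Z i" and ?Q = "2 ^ K :: nat" and ?B = "factor_basis K J Ts Us"
  have l: "?l < ?Q" by (rule unit_level_less) (use Z i in auto)
  have sign: "contrast_sign K S ?l = Zprod Z i S" if "S \<in> set Ts \<union> set Us" for S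
    by (rule contrast_sign_unit_level) (use Z i Ts Us that in auto)
  have B: "?B $$ (t, c) = (if t < ?Q then if c < length Ts then contrast_mat K Ts $$ (t, c) else 0
      else if c < length Ts then 0 else kron_id J (contrast_mat K Us) $$ (t - ?Q, c - length Ts))"
    if "t < ?Q + ?Q * J" for t
    unfolding factor_basis_def using that c by (subst index_block_diag_mat) auto
  have "(chiL K N J Z x * ?B) $$ (i, c) = ?B $$ (?l, c)
      + (\<Sum>v\<in>{0..<J}. x i v * ?B $$ (?Q + ?l * J + v, c))"
    by (rule index_chiL_mult[OF i l]) (use c factor_basis_carrier in auto)
  also have "\<dots> = ?X $$ (i, c)"
  proof (cases "c < length Ts")
    case True
    then show ?thesis using i l B sign block_index_less[OF l] by simp
  next
    case False
    define d where "d = c - length Ts"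
    have d: "d < length Us * J" using c False unfolding d_def by auto
    then have J: "0 < J" and "d div J < length Us" by (cases J, auto)
    have "?B $$ (?Q + ?l * J + v, c) =
        (if v = d mod J then Zprod Z i (Us ! (d div J)) else 0)" if "v < J" for v
      using B[of "?Q + ?l * J + v"] False d J l that \<open>d div J < length Us\<close> sign
        block_index_less[OF l that]
      unfolding d_def by auto
    then show ?thesis using False i c l B J unfolding d_def
      by (simp add: if_distrib[of "\<lambda>y. x i _ * y"] sum.delta cong: if_cong)
  qed
  finally show "(chiL K N J Z x * ?B) $$ (i, c) = ?X $$ (i, c)" .
qed simp_all

lemma Zprod_empty [simp]: "Zprod Z i {} = 1"
  unfolding Zprod_def by simp

lemma effects_subset: "S \<in> effects K \<Longrightarrow> S \<subseteq> {..<K}"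
  unfolding effects_def by auto

lemma X_N_eq_chiL_mult:
  assumes Z: "\<forall>i<N. \<forall>k<K. Z i k = 1 \<or> Z i k = -1" and "set Fp \<subseteq> effects K"
  shows "X_N N Z Fp = chiL K N J Z x * factor_basis K J ({} # Fp) []"
proof -
  have Ts: "\<forall>S\<in>set ({} # Fp). S \<subseteq> {..<K}" using assms(2) effects_subset by auto
  have Us: "\<forall>S\<in>set []. S \<subseteq> {..<K}" by simp
  show ?thesis unfolding X_N_def chiL_mult_factor_basis[OF Z Ts Us]
    by (rule eq_matI) (auto simp: nth_Cons')
qed

lemma X_F_eq_chiL_mult:
  assumes Z: "\<forall>i<N. \<forall>k<K. Z i k = 1 \<or> Z i k = -1" and "set Fp \<subseteq> effects K"
  shows "X_F N J Z x Fp = chiL K N J Z x * factor_basis K J ({} # Fp) [{}]"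
proof -
  have Ts: "\<forall>S\<in>set ({} # Fp). S \<subseteq> {..<K}" using assms(2) effects_subset by auto
  have Us: "\<forall>S\<in>set [{}]. S \<subseteq> {..<K}" by simp
  show ?thesis unfolding X_F_def chiL_mult_factor_basis[OF Z Ts Us]
    by (rule eq_matI) (auto simp: nth_Cons')
qed

lemma X_L_eq_chiL_mult:
  assumes Z: "\<forall>i<N. \<forall>k<K. Z i k = 1 \<or> Z i k = -1" and "set Fp \<subseteq> effects K"
  shows "X_L N J Z x Fp = chiL K N J Z x * factor_basis K J ({} # Fp) ({} # Fp)"
proof -
  let ?p = "length Fp" and ?Ts = "{} # Fp"
  have Ts: "\<forall>S\<in>set ?Ts. S \<subseteq> {..<K}" using assms(2) effects_subset by auto
  let ?M = "mat N (length ?Ts + length ?Ts * J) (\<lambda>(i, c). if c < length ?Ts then Zprod Z i (?Ts ! c)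
    else Zprod Z i (?Ts ! ((c - length ?Ts) div J)) * x i ((c - length ?Ts) mod J))"
  have "chiL K N J Z x * factor_basis K J ?Ts ?Ts = ?M"
    by (rule chiL_mult_factor_basis[OF Z Ts Ts])
  moreover have "X_L N J Z x Fp = ?M"
  proof (rule eq_matI)
    fix i c assume "i < dim_row ?M" and c: "c < dim_col ?M"
    then have i: "i < N" by simp
    consider "c < 1 + ?p" | "1 + ?p \<le> c" "c - 1 - ?p < J" | "1 + ?p \<le> c" "J \<le> c - 1 - ?p"
      by fastforce
    then show "X_L N J Z x Fp $$ (i, c) = ?M $$ (i, c)"
    proof cases
      case 3
      then have "0 < J" and "c - Suc ?p - J = c - Suc (?p + J)" using c by (cases J, auto)
      then show ?thesis using i c 3 by (auto simp: X_L_def Let_def le_div_geq le_mod_geq)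
    qed (use i c in \<open>auto simp: X_L_def nth_Cons'\<close>)
  qed (simp_all add: X_L_def algebra_simps)
  ultimately show ?thesis by simp
qed

section \<open>The restrictions as block-diagonal matrices\<close>

lemma R_N_eq_block_diag:
  assumes "Cm \<in> carrier_mat m Q"
  shows "R_N Q J Cm = block_diag_mat Cm (kron_id J (1\<^sub>m Q))"
  unfolding R_N_def kron_id_one using assms by (intro eq_matI) (auto simp: index_block_diag_mat)

lemma index_kron_id_diff_mat:
  assumes "r < (Q - 1) * J" and "c < Q * J"
  shows "kron_id J (diff_mat Q) $$ (r, c) = (if c = r then 1 else if c = r + J then -1 else 0)"
proof -
  have J: "0 < J" using assms(2) by (cases J) auto
  have "c = r \<longleftrightarrow> c mod J = r mod J \<and> c div J = r div J"
    by (metis div_mult_mod_eq)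
  moreover have "c = r + J \<longleftrightarrow> c mod J = r mod J \<and> c div J = r div J + 1"
  proof
    assume "c mod J = r mod J \<and> c div J = r div J + 1"
    then have "c = (r div J + 1) * J + r mod J" using div_mult_mod_eq[of c J] by simp
    also have "\<dots> = r + J" using div_mult_mod_eq[of r J] by (simp add: algebra_simps)
    finally show "c = r + J" .
  qed (use J in simp)
  moreover have "r div J < Q - 1" "c div J < Q" using assms by simp_all
  then have "diff_mat Q $$ (r div J, c div J) =
      (if c div J = r div J then 1 else if c div J = r div J + 1 then -1 else 0)"
    unfolding diff_mat_def by simp
  ultimately show ?thesis using assms by auto
qed

lemma R_F_eq_block_diag:
  assumes "Cm \<in> carrier_mat m Q"
  shows "R_F Q J Cm = block_diag_mat Cm (kron_id J (diff_mat Q))"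
  unfolding R_F_def using assms
  by (intro eq_matI) (auto simp: index_block_diag_mat index_kron_id_diff_mat Let_def simp del: index_kron_id)

lemma R_L_eq_block_diag:
  assumes "Cm \<in> carrier_mat m Q"
  shows "R_L Q J Cm = block_diag_mat Cm (kron_id J Cm)"
  unfolding R_L_def using assms by (intro eq_matI) (auto simp: index_block_diag_mat Let_def)

section \<open>Reading off the factor effects\<close>

definition coef_selector :: "nat \<Rightarrow> nat \<Rightarrow> real mat" where
  "coef_selector p k = mat p k (\<lambda>(a, c). if c = a + 1 then 1 else 0)"

lemma dim_coef_selector [simp]: "dim_row (coef_selector p k) = p" "dim_col (coef_selector p k) = k"
  unfolding coef_selector_def by simp_all

lemma coef_selector_mult_vec:
  assumes "p < k" and "v \<in> carrier_vec k"
  shows "coef_selector p k *\<^sub>v v = vec p (\<lambda>a. v $ (a + 1))"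
  using assms by (intro eq_vecI) (auto simp: coef_selector_def scalar_prod_def sum.delta
      if_distrib[of "\<lambda>y. y * _"] cong: if_cong)

lemma coef_selector_congruence:
  assumes "p < k" and "M \<in> carrier_mat k k"
  shows "coef_selector p k * M * transpose_mat (coef_selector p k) = mat p p (\<lambda>(a, b). M $$ (a + 1, b + 1))"
proof -
  have "coef_selector p k * M = mat p k (\<lambda>(a, c). M $$ (a + 1, c))"
    using assms by (intro eq_matI) (auto simp: coef_selector_def scalar_prod_def sum.delta
        if_distrib[of "\<lambda>y. y * _"] cong: if_cong)
  then show ?thesis
    using assms by (intro eq_matI) (auto simp: coef_selector_def scalar_prod_def sum.delta
        if_distrib[of "\<lambda>y. _ * y"] cong: if_cong)
qed

lemma tau_u_eq_coef_selector:
  "X \<in> carrier_mat n k \<Longrightarrow> p < k \<Longrightarrow> tau_u p X Y = 2 \<cdot>\<^sub>v (coef_selector p k *\<^sub>v ols X Y)"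
  unfolding tau_u_def by (auto simp: coef_selector_mult_vec ols_carrier intro!: eq_vecI)

lemma Omega_u_eq_coef_selector:
  "X \<in> carrier_mat n k \<Longrightarrow> p < k \<Longrightarrow>
   Omega_u p X Y = 4 \<cdot>\<^sub>m (coef_selector p k * ehw X Y * transpose_mat (coef_selector p k))"
  unfolding Omega_u_def by (auto simp: coef_selector_congruence ehw_carrier intro!: eq_matI)

lemma upper_rows_mult_vec:
  fixes B :: "real mat"
  assumes "B \<in> carrier_mat d k" and "Q \<le> d" and "\<beta> \<in> carrier_vec k"
  shows "vec Q (\<lambda>q. (B *\<^sub>v \<beta>) $ q) = mat Q k (\<lambda>(q, c). B $$ (q, c)) *\<^sub>v \<beta>"
  using assms by (intro eq_vecI) (auto simp: scalar_prod_def)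

lemma upper_left_congruence:
  fixes B :: "real mat"
  assumes "B \<in> carrier_mat d k" and "Q \<le> d" and "\<Omega> \<in> carrier_mat k k"
  defines "T \<equiv> mat Q k (\<lambda>(q, c). B $$ (q, c))"
  shows "mat Q Q (\<lambda>(a, b). (B * \<Omega> * transpose_mat B) $$ (a, b)) = T * \<Omega> * transpose_mat T"
proof -
  have "B * \<Omega> * transpose_mat B = B * (\<Omega> * transpose_mat B)"
    and "T * \<Omega> * transpose_mat T = T * (\<Omega> * transpose_mat T)"
    using carrier_matD[OF assms(1)] carrier_matD[OF assms(3)]
    by (simp_all add: assoc_mult_mat_dims T_def)
  then show ?thesis using assms by (auto simp: T_def scalar_prod_def intro!: eq_matI)
qed

lemma Cmat_mult_upper_factor_basis:
  fixes Us :: "nat set list" and J :: nat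
  assumes K: "1 \<le> K" and dist: "distinct Fp" and Fp: "set Fp \<subseteq> effects K"
  defines "k \<equiv> length ({} # Fp) + length Us * J"
  shows "Cmat K Fp * mat (2 ^ K) k (\<lambda>(q, c). factor_basis K J ({} # Fp) Us $$ (q, c))
    = 2 \<cdot>\<^sub>m coef_selector (length Fp) k"
proof (rule eq_matI)
  let ?Ts = "{} # Fp" and ?Q = "2 ^ K :: nat"
  fix a c assume "a < dim_row (2 \<cdot>\<^sub>m coef_selector (length Fp) k)" "c < dim_col (2 \<cdot>\<^sub>m coef_selector (length Fp) k)"
  then have a: "a < length Fp" and c: "c < k" by (auto simp: coef_selector_def)
  have sub: "Fp ! a \<subseteq> {..<K}" using a Fp nth_mem[OF a] by (intro effects_subset) blast
  have B: "factor_basis K J ?Ts Us $$ (q, c) = (if c < length ?Ts then contrast_sign K (?Ts ! c) q else 0)"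
    if "q < ?Q" for q
    unfolding factor_basis_def using that c by (subst index_block_diag_mat) (auto simp: k_def)
  have "(Cmat K Fp * mat ?Q k (\<lambda>(q, c). factor_basis K J ?Ts Us $$ (q, c))) $$ (a, c)
      = (1 / 2 ^ (K - 1)) * (\<Sum>q<?Q. contrast_sign K (Fp ! a) q * factor_basis K J ?Ts Us $$ (q, c))"
    using a c by (simp add: Cmat_eq_contrast_mat scalar_prod_def sum_distrib_left atLeast0LessThan)
  also have "\<dots> = (if c = a + 1 then 2 else 0)"
  proof (cases "c < length ?Ts")
    case True
    have eq: "Fp ! a = ?Ts ! c \<longleftrightarrow> c = a + 1"
    proof (cases c)
      case 0
      have "Fp ! a \<noteq> {}" using nth_mem[OF a] Fp unfolding effects_def by blast
      then show ?thesis using 0 by simp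
    next
      case (Suc c')
      then show ?thesis using True a dist by (auto simp: nth_eq_iff_index_eq)
    qed
    have "\<forall>S\<in>set ?Ts. S \<subseteq> {..<K}" using Fp effects_subset by auto
    then have sub': "?Ts ! c \<subseteq> {..<K}" using nth_mem[OF True] by blast
    have "(1 / 2 ^ (K - 1)) * 2 ^ K = (2 :: real)" using K by (cases K) simp_all
    then show ?thesis using True contrast_sign_orthogonal[OF sub sub'] B eq by simp
  qed (use B a in auto)
  finally show "(Cmat K Fp * mat ?Q k (\<lambda>(q, c). factor_basis K J ?Ts Us $$ (q, c))) $$ (a, c)
      = (2 \<cdot>\<^sub>m coef_selector (length Fp) k) $$ (a, c)"
    using a c by (simp add: coef_selector_def)
qed (simp_all add: Cmat_def coef_selector_def)

lemma kernel_split_Cmat_complement: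
  assumes "distinct Fp" and "distinct Fm" and "set Fp \<subseteq> effects K" and "set Fm = effects K - set Fp"
  shows "kernel_split (Cmat K Fm) (2 ^ (K - 1) / 2 ^ K \<cdot>\<^sub>m contrast_mat K Fm) (contrast_mat K ({} # Fp))
    (1 / 2 ^ K \<cdot>\<^sub>m transpose_mat (contrast_mat K ({} # Fp)))"
proof -
  have "Pow {..<K} = insert {} (effects K)" and "{} \<notin> effects K" unfolding effects_def by auto
  then have "distinct (({} # Fp) @ Fm)" and "set ({} # Fp) \<union> set Fm = Pow {..<K}"
    using assms by auto
  from kernel_split_contrast_mat[OF this, of "1 / 2 ^ (K - 1)"] show ?thesis
    by (simp add: Cmat_eq_contrast_mat)
qed

lemma rls_factor_basis:
  fixes K N J g :: nat and x Z :: "nat \<Rightarrow> nat \<Rightarrow> real" and Fp Fm Us :: "nat set list"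
    and \<Gamma> :: "real mat"
  assumes Fp_distinct: "distinct Fp" and Fm_distinct: "distinct Fm"
    and Fp_sub: "set Fp \<subseteq> effects K" and Fm_def: "set Fm = effects K - set Fp"
    and chi_nonsing: "invertible_mat (transpose_mat (chiL K N J Z x) * chiL K N J Z x)"
    and ks: "kernel_split \<Gamma> S0 (contrast_mat K Us) L0" and \<Gamma>: "\<Gamma> \<in> carrier_mat g (2 ^ K)"
    and Y: "Y \<in> carrier_vec N"
  defines "B \<equiv> factor_basis K J ({} # Fp) Us"
    and "R \<equiv> block_diag_mat (Cmat K Fm) (kron_id J \<Gamma>)"
  shows "rls (chiL K N J Z x) Y R = B *\<^sub>v ols (chiL K N J Z x * B) Y"
    and "rls_cov_full (chiL K N J Z x) Y R = B * ehw (chiL K N J Z x * B) Y * transpose_mat B"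
proof -
  let ?Q = "2 ^ K :: nat" and ?chi = "chiL K N J Z x"
  note kernel_split_Cmat_complement[OF Fp_distinct Fm_distinct Fp_sub Fm_def]
  note ks_R = kernel_split_block_diag_mat[OF this kernel_split_kron_id[OF ks, of J],
      folded R_def factor_basis_def B_def]
  have R: "R \<in> carrier_mat (length Fm + g * J) (?Q + ?Q * J)"
    unfolding R_def using \<Gamma> by (intro carrier_matI) (simp_all add: Cmat_def)
  have chi: "?chi \<in> carrier_mat N (?Q + ?Q * J)" by (simp add: carrier_matI)
  have det: "det (transpose_mat ?chi * ?chi) \<noteq> 0"
    by (rule invertible_mat_det_nonzero[OF chi_nonsing]) (use chi in \<open>auto intro!: carrier_matI\<close>)
  show "rls ?chi Y R = B *\<^sub>v ols (?chi * B) Y"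
    by (rule rls_eq_ols_null_space_basis[OF ks_R R chi det Y])
  show "rls_cov_full ?chi Y R = B * ehw (?chi * B) Y * transpose_mat B"
    by (rule rls_cov_full_eq_ehw_null_space_basis[OF ks_R R chi det Y])
qed

lemma factor_regression_eq_restricted:
  fixes K N J g :: nat and Y :: "nat \<Rightarrow> real" and x Z :: "nat \<Rightarrow> nat \<Rightarrow> real"
    and Fp Fm Us :: "nat set list" and \<Gamma> :: "real mat"
  assumes Fp_distinct: "distinct Fp" and Fm_distinct: "distinct Fm"
    and Fp_sub: "set Fp \<subseteq> effects K" and Fm_def: "set Fm = effects K - set Fp"
    and Fm_ne: "Fm \<noteq> []"
    and chi_nonsing: "invertible_mat (transpose_mat (chiL K N J Z x) * chiL K N J Z x)"
    and ks: "kernel_split \<Gamma> S0 (contrast_mat K Us) L0" and \<Gamma>: "\<Gamma> \<in> carrier_mat g (2 ^ K)"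
  defines "X \<equiv> chiL K N J Z x * factor_basis K J ({} # Fp) Us"
    and "R \<equiv> block_diag_mat (Cmat K Fm) (kron_id J \<Gamma>)"
  shows "tau_u (length Fp) X (vec N Y) = Cmat K Fp *\<^sub>v Yhat_r (2 ^ K) (chiL K N J Z x) (vec N Y) R
    \<and> Omega_u (length Fp) X (vec N Y)
      = Cmat K Fp * Psi_r (2 ^ K) (chiL K N J Z x) (vec N Y) R * transpose_mat (Cmat K Fp)"
proof -
  let ?Q = "2 ^ K :: nat" and ?chi = "chiL K N J Z x" and ?Y = "vec N Y" and ?p = "length Fp"
  let ?B = "factor_basis K J ({} # Fp) Us"
  define k where "k = length ({} # Fp) + length Us * J"
  define T where "T = mat ?Q k (\<lambda>(q, c). ?B $$ (q, c))"
  define \<beta> where "\<beta> = ols X ?Y"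
  define \<Omega> where "\<Omega> = ehw X ?Y"
  note fit = rls_factor_basis[OF Fp_distinct Fm_distinct Fp_sub Fm_def chi_nonsing ks \<Gamma> vec_carrier,
      folded X_def R_def]
  have "1 \<le> K"
  proof -
    obtain S where "S \<in> set Fm" using Fm_ne by (cases Fm) auto
    then show ?thesis using Fm_def unfolding effects_def by (cases K) auto
  qed
  have B: "?B \<in> carrier_mat (?Q + ?Q * J) k" unfolding k_def by (rule factor_basis_carrier)
  have X: "X \<in> carrier_mat N k" unfolding X_def by (rule mult_carrier_mat[OF _ B]) (simp add: carrier_matI)
  have CT: "Cmat K Fp * T = 2 \<cdot>\<^sub>m coef_selector ?p k"
    unfolding T_def k_def by (rule Cmat_mult_upper_factor_basis[OF \<open>1 \<le> K\<close> Fp_distinct Fp_sub])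
  have T: "T \<in> carrier_mat ?Q k" and Cp: "Cmat K Fp \<in> carrier_mat ?p ?Q"
    unfolding T_def by (simp_all add: Cmat_def)
  have \<beta>: "\<beta> \<in> carrier_vec k" and \<Omega>: "\<Omega> \<in> carrier_mat k k"
    unfolding \<beta>_def \<Omega>_def using ols_carrier[OF X] ehw_carrier[OF X] by auto
  have pk: "?p < k" unfolding k_def by simp
  have "Yhat_r ?Q ?chi ?Y R = T *\<^sub>v \<beta>"
    unfolding Yhat_r_def fit \<beta>_def[symmetric] T_def by (rule upper_rows_mult_vec[OF B _ \<beta>]) simp
  then have "Cmat K Fp *\<^sub>v Yhat_r ?Q ?chi ?Y R = (2 \<cdot>\<^sub>m coef_selector ?p k) *\<^sub>v \<beta>"
    using assoc_mult_mat_vec[OF Cp T \<beta>] CT by simp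
  also have "\<dots> = tau_u ?p X ?Y"
    unfolding tau_u_eq_coef_selector[OF X pk] \<beta>_def using \<beta>[unfolded \<beta>_def]
    by (simp add: smult_mult_mat_vec_dims)
  finally have tau: "tau_u ?p X ?Y = Cmat K Fp *\<^sub>v Yhat_r ?Q ?chi ?Y R" ..
  have "Psi_r ?Q ?chi ?Y R = T * \<Omega> * transpose_mat T"
    unfolding Psi_r_def fit \<Omega>_def[symmetric] T_def by (rule upper_left_congruence[OF B _ \<Omega>]) simp
  then have "Cmat K Fp * Psi_r ?Q ?chi ?Y R * transpose_mat (Cmat K Fp)
      = (2 \<cdot>\<^sub>m coef_selector ?p k) * \<Omega> * transpose_mat (2 \<cdot>\<^sub>m coef_selector ?p k)"
    unfolding CT[symmetric] using Cp T \<Omega> by (simp add: assoc_mult_mat_dims transpose_mult_dims)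
  also have "\<dots> = Omega_u ?p X ?Y"
    unfolding Omega_u_eq_coef_selector[OF X pk] \<Omega>_def using \<Omega>[unfolded \<Omega>_def]
    by (simp add: transpose_smult_mat mult_smult_left_dims mult_smult_right_dims smult_smult_mat)
  finally show ?thesis using tau by simp
qed

lemma contrast_mat_empty_effect: "contrast_mat K [{}] = mat (2 ^ K) 1 (\<lambda>_. 1)"
  by (rule eq_matI) (auto simp: contrast_sign_def)

theorem proposition2:
  fixes K N J :: nat
    and Y :: "nat \<Rightarrow> real"
    and x :: "nat \<Rightarrow> nat \<Rightarrow> real"
    and Z :: "nat \<Rightarrow> nat \<Rightarrow> real"
    and Fp Fm :: "nat set list"
  assumes Z_pm1: "\<And>i k. i < N \<Longrightarrow> k < K \<Longrightarrow> Z i k = 1 \<or> Z i k = -1"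
    and x_centered: "\<And>j. j < J \<Longrightarrow> (\<Sum>i<N. x i j) = 0"
    and Fp_distinct: "distinct Fp" and Fm_distinct: "distinct Fm"
    and Fp_sub: "set Fp \<subseteq> effects K"
    and Fm_def: "set Fm = effects K - set Fp"
    and Fm_ne: "Fm \<noteq> []"
    and chi_nonsing: "invertible_mat (transpose_mat (chiL K N J Z x) * chiL K N J Z x)"
  shows
   "(let Q = 2 ^ K; p = length Fp; Yv = vec N Y; Cp = Cmat K Fp; Cm = Cmat K Fm;
         chi = chiL K N J Z x
     in tau_u p (X_N N Z Fp) Yv = Cp *\<^sub>v Yhat_r Q chi Yv (R_N Q J Cm)
      \<and> Omega_u p (X_N N Z Fp) Yv = Cp * Psi_r Q chi Yv (R_N Q J Cm) * transpose_mat Cp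
      \<and> tau_u p (X_F N J Z x Fp) Yv = Cp *\<^sub>v Yhat_r Q chi Yv (R_F Q J Cm)
      \<and> Omega_u p (X_F N J Z x Fp) Yv = Cp * Psi_r Q chi Yv (R_F Q J Cm) * transpose_mat Cp
      \<and> tau_u p (X_L N J Z x Fp) Yv = Cp *\<^sub>v Yhat_r Q chi Yv (R_L Q J Cm)
      \<and> Omega_u p (X_L N J Z x Fp) Yv = Cp * Psi_r Q chi Yv (R_L Q J Cm) * transpose_mat Cp)"
proof -
  have Z: "\<forall>i<N. \<forall>k<K. Z i k = 1 \<or> Z i k = -1" using Z_pm1 by blast
  have Cm: "Cmat K Fm \<in> carrier_mat (length Fm) (2 ^ K)" by (simp add: Cmat_def)
  note fit = factor_regression_eq_restricted[where Y = Y, OF Fp_distinct Fm_distinct Fp_sub Fm_def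
      Fm_ne chi_nonsing]
  have N: "kernel_split (1\<^sub>m (2 ^ K)) (1\<^sub>m (2 ^ K)) (contrast_mat K []) (0\<^sub>m 0 (2 ^ K))"
    by (rule kernel_split_one_mat) auto
  have "0 < (2 :: nat) ^ K" by simp
  note F = kernel_split_diff_mat[OF this, folded contrast_mat_empty_effect]
  note L = kernel_split_Cmat_complement[OF Fp_distinct Fm_distinct Fp_sub Fm_def]
  show ?thesis
    unfolding Let_def X_N_eq_chiL_mult[OF Z Fp_sub, where J = J and x = x] X_F_eq_chiL_mult[OF Z Fp_sub]
      X_L_eq_chiL_mult[OF Z Fp_sub] R_N_eq_block_diag[OF Cm] R_F_eq_block_diag[OF Cm]
      R_L_eq_block_diag[OF Cm]
    using fit[OF N one_carrier_mat] fit[OF F diff_mat_carrier] fit[OF L Cm] by blast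
qed

end
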